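(* Let $\mathfrak M$ be a closed O*-algebra on a dense subspace $\mathcal D$ of a Hilbert space $\mathcal H$ such that $\mathfrak M'_{\mathrm w}\mathcal D\subset\mathcal D$, and let $E'$ be a projection in the von Neumann algebra $\mathfrak M'_{\mathrm w}$. Let $Z$ be the central support of $E'$, $\mathcal E:=\langle \mathfrak M'_{\mathrm w}E'\mathcal D\rangle\oplus (I-Z)\mathcal D$, and for $X\in(\mathfrak M_{E'})''_{\mathrm{wc}}$ let $X_e\in\mathcal L^\dagger(\mathcal E)$ be the operator $X_e\big(\sum_k C_kE'\xi_k+(I-Z)\eta\big)=\sum_k C_kX(E'\xi_k)$ ($C_k\in\mathfrak M'_{\mathrm w}$, $\xi_k,\eta\in\mathcal D$). Suppose that $\bigcap_{X\in(\mathfrak M_{E'})''_{\mathrm{wc}}}D(\overline{X_e})=\mathcal D$ (i.e. the completion of $\mathcal E$ with respect to the graph topology of the O*-algebra $\{X_e: X\in(\mathfrak M_{E'})''_{\mathrm{wc}}\}$ equals $\mathcal D$). Then $(\mathfrak M''_{\mathrm{wc}})_{E'}=(\mathfrak M_{E'})''_{\mathrm{wc}}$.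
   Context: For a dense subspace $\mathcal D$ of $\mathcal H$, $\mathcal L^\dagger(\mathcal D)$ is the set of linear operators $X$ with domain $\mathcal D$ such that $X\mathcal D\subset\mathcal D$, $\mathcal D\subset D(X^* )$, $X^*\mathcal D\subset\mathcal D$, a *-algebra with involution $X^\dagger:=X^*\upharpoonright\mathcal D$. An O*-algebra on $\mathcal D$ is a *-subalgebra of $\mathcal L^\dagger(\mathcal D)$ containing the identity. The graph topology $t_{\mathfrak M}$ is defined by the seminorms $\xi\mapsto\|X\xi\|$, $X\in\mathfrak M$; $\mathfrak M$ is closed if $\mathcal D[t_{\mathfrak M}]$ is complete. Weak commutant: $\mathfrak M'_{\mathrm w}=\{C\in\mathcal B(\mathcal H):\langle CX\xi,\eta\rangle=\langle C\xi,X^\dagger\eta\rangle\ \forall X\in\mathfrak M,\ \xi,\eta\in\mathcal D\}$ (a von Neumann algebra when $\mathfrak M'_{\mathrm w}\mathcal D\subset\mathcal D$). Unbounded bicommutant: $\mathfrak M''_{\mathrm{wc}}=\{X\in\mathcal L^\dagger(\mathcal D):\langle CX\xi,\eta\rangle=\langle C\xi,X^\dagger\eta\rangle\ \forall C\in\mathfrak M'_{\mathrm w},\ \xi,\eta\in\mathcal D\}$. For an O*-algebra $\mathfrak N$ on $\mathcal D$ and a projection $E'\in\mathfrak N'_{\mathrm w}$ with $E'\mathcal D\subset\mathcal D$, the reduced algebra is $\mathfrak N_{E'}=\{XE'\upharpoonright E'\mathcal D: X\in\mathfrak N\}$, an O*-algebra on $E'\mathcal D$ in the Hilbert space $E'\mathcal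 H$; $(\mathfrak M_{E'})''_{\mathrm{wc}}$ is the unbounded bicommutant computed relative to $E'\mathcal D\subset E'\mathcal H$. (Note $(\mathfrak M''_{\mathrm{wc}})'_{\mathrm w}=\mathfrak M'_{\mathrm w}$, so $E'$ may be used to reduce $\mathfrak M''_{\mathrm{wc}}$.) The central support $Z$ of $E'$ is the projection onto the closure of $\langle\mathfrak M'_{\mathrm w}E'\mathcal H\rangle$, where $\langle\cdot\rangle$ denotes linear span. $\overline{X_e}$ denotes the closure of the closable operator $X_e$. *)

theory Defs
  imports "HOL-Analysis.Analysis"
begin

class cvector = real_vector +
  fixes scaleC :: "complex \<Rightarrow> 'a \<Rightarrow> 'a" (infixr "*\<^sub>C" 75)
  assumes scaleC_add_right: "a *\<^sub>C (x + y) = a *\<^sub>C x + a *\<^sub>C y"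
    and scaleC_add_left: "(a + b) *\<^sub>C x = a *\<^sub>C x + b *\<^sub>C x"
    and scaleC_scaleC: "a *\<^sub>C (b *\<^sub>C x) = (a * b) *\<^sub>C x"
    and scaleC_one: "1 *\<^sub>C x = x"
    and scaleR_scaleC: "scaleR r x = complex_of_real r *\<^sub>C x"

class cinner_space = cvector + real_normed_vector +
  fixes cinner :: "'a \<Rightarrow> 'a \<Rightarrow> complex"
  assumes cinner_commute: "cinner x y = cnj (cinner y x)"
    and cinner_add_left: "cinner (x + y) z = cinner x z + cinner y z"
    and cinner_scaleC_left: "cinner (a *\<^sub>C x) y = a * cinner x y"
    and cinner_self_real: "Im (cinner x x) = 0"
    and cinner_self_nonneg: "0 \<le> Re (cinner x x)"
    and cinner_self_eq_zero: "cinner x x = 0 \<longleftrightarrow> x = 0"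
    and norm_eq_sqrt_cinner: "norm x = sqrt (Re (cinner x x))"

class chilbert_space = cinner_space + complete_space


instantiation complex :: chilbert_space
begin
definition scaleC_complex :: "complex \<Rightarrow> complex \<Rightarrow> complex" where "scaleC_complex a x = a * x"
definition cinner_complex :: "complex \<Rightarrow> complex \<Rightarrow> complex" where "cinner_complex x y = x * cnj y"
instance
proof
  fix x y z a b :: complex and r :: real
  show "a *\<^sub>C (x + y) = a *\<^sub>C x + a *\<^sub>C y" by (simp add: scaleC_complex_def algebra_simps)
  show "(a + b) *\<^sub>C x = a *\<^sub>C x + b *\<^sub>C x" by (simp add: scaleC_complex_def algebra_simps)
  show "a *\<^sub>C (b *\<^sub>C x) = (a * b) *\<^sub>C x" by (simp add: scaleC_complex_def)
  show "1 *\<^sub>C x = x" by (simp add: scaleC_complex_def)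
  show "scaleR r x = complex_of_real r *\<^sub>C x" by (simp add: scaleC_complex_def scaleR_conv_of_real)
  show "cinner x y = cnj (cinner y x)" by (simp add: cinner_complex_def)
  show "cinner (x + y) z = cinner x z + cinner y z" by (simp add: cinner_complex_def algebra_simps)
  show "cinner (a *\<^sub>C x) y = a * cinner x y" by (simp add: cinner_complex_def scaleC_complex_def)
  show "Im (cinner x x) = 0" by (simp add: cinner_complex_def)
  show "0 \<le> Re (cinner x x)" by (simp add: cinner_complex_def)
  show "cinner x x = 0 \<longleftrightarrow> x = 0" by (simp add: cinner_complex_def)
  show "norm x = sqrt (Re (cinner x x))" by (simp add: cinner_complex_def complex_mult_cnj cmod_def power2_eq_square)
qed
end

section \<open>Subspaces, bounded operators, projections (relative to a closed subspace K)\<close>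

definition csubspace :: "'h::cvector set \<Rightarrow> bool" where
  "csubspace S \<longleftrightarrow> 0 \<in> S \<and> (\<forall>x\<in>S. \<forall>y\<in>S. x + y \<in> S) \<and> (\<forall>a. \<forall>x\<in>S. a *\<^sub>C x \<in> S)"

definition cspan :: "'h::cvector set \<Rightarrow> 'h set" where
  "cspan S = {y. \<exists>n (a::nat \<Rightarrow> complex) v. (\<forall>k<n. v k \<in> S) \<and> y = (\<Sum>k<n. a k *\<^sub>C v k)}"

definition clinear_on :: "'h::cvector set \<Rightarrow> ('h \<Rightarrow> 'h) \<Rightarrow> bool" where
  "clinear_on S X \<longleftrightarrow> (\<forall>x\<in>S. \<forall>y\<in>S. X (x + y) = X x + X y) \<and> (\<forall>a. \<forall>x\<in>S. X (a *\<^sub>C x) = a *\<^sub>C X x)"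

text \<open>Bounded operators on the Hilbert space K (a closed subspace of the ambient space),
  represented by functions vanishing outside K.\<close>
definition bops :: "'h::chilbert_space set \<Rightarrow> ('h \<Rightarrow> 'h) set" where
  "bops K = {C. clinear_on K C \<and> C ` K \<subseteq> K \<and> (\<exists>c. \<forall>x\<in>K. norm (C x) \<le> c * norm x)
              \<and> (\<forall>x. x \<notin> K \<longrightarrow> C x = 0)}"

definition is_proj :: "'h::chilbert_space set \<Rightarrow> ('h \<Rightarrow> 'h) \<Rightarrow> bool" where
  "is_proj K P \<longleftrightarrow> P \<in> bops K \<and> (\<forall>x. P (P x) = P x) \<and> (\<forall>x\<in>K. \<forall>y\<in>K. cinner (P x) y = cinner x (P y))"

section \<open>Unbounded operators on a dense domain D\<close>

text \<open>L-dagger(D): linear maps X with domain D (vanishing outside D), with X D \<subseteq> D,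
  D \<subseteq> D(X*) and X* D \<subseteq> D; the last two conditions say that for every eta in D the
  adjoint value X* eta exists and lies in D.\<close>
definition ldag :: "'h::chilbert_space set \<Rightarrow> ('h \<Rightarrow> 'h) set" where
  "ldag D = {X. clinear_on D X \<and> X ` D \<subseteq> D
              \<and> (\<forall>\<eta>\<in>D. \<exists>\<zeta>\<in>D. \<forall>\<xi>\<in>D. cinner (X \<xi>) \<eta> = cinner \<xi> \<zeta>)
              \<and> (\<forall>x. x \<notin> D \<longrightarrow> X x = 0)}"

definition adj :: "'h::chilbert_space set \<Rightarrow> ('h \<Rightarrow> 'h) \<Rightarrow> ('h \<Rightarrow> 'h)" where
  "adj D X = (\<lambda>\<eta>. if \<eta> \<in> D then (THE \<zeta>. \<zeta> \<in> D \<and> (\<forall>\<xi>\<in>D. cinner (X \<xi>) \<eta> = cinner \<xi> \<zeta>)) else 0)"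

definition idD :: "'h::chilbert_space set \<Rightarrow> 'h \<Rightarrow> 'h" where
  "idD D = (\<lambda>x. if x \<in> D then x else 0)"

definition is_Ostar_algebra :: "'h::chilbert_space set \<Rightarrow> ('h \<Rightarrow> 'h) set \<Rightarrow> bool" where
  "is_Ostar_algebra D M \<longleftrightarrow> M \<subseteq> ldag D \<and> idD D \<in> M
     \<and> (\<forall>X\<in>M. \<forall>Y\<in>M. (\<lambda>x. X x + Y x) \<in> M)
     \<and> (\<forall>a. \<forall>X\<in>M. (\<lambda>x. a *\<^sub>C X x) \<in> M)
     \<and> (\<forall>X\<in>M. \<forall>Y\<in>M. (X \<circ> Y) \<in> M)
     \<and> (\<forall>X\<in>M. adj D X \<in> M)"

text \<open>M is closed: D is complete for the graph topology t_M (the locally convex uniform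
  structure given by the seminorms xi |-> norm (X xi), X in M): every Cauchy filter on D
  converges in D.\<close>
definition graph_closed :: "'h::chilbert_space set \<Rightarrow> ('h \<Rightarrow> 'h) set \<Rightarrow> bool" where
  "graph_closed D M \<longleftrightarrow>
     (\<forall>F. F \<noteq> bot \<and> F \<le> principal D
        \<and> (\<forall>X\<in>M. \<forall>e>0. eventually (\<lambda>(x, y). norm (X x - X y) < e) (F \<times>\<^sub>F F))
        \<longrightarrow> (\<exists>\<xi>\<in>D. \<forall>X\<in>M. filterlim X (nhds (X \<xi>)) F))"

definition wcomm :: "'h::chilbert_space set \<Rightarrow> 'h set \<Rightarrow> ('h \<Rightarrow> 'h) set \<Rightarrow> ('h \<Rightarrow> 'h) set" where
  "wcomm K D M = {C \<in> bops K. \<forall>X\<in>M. \<forall>\<xi>\<in>D. \<forall>\<eta>\<in>D. cinner (C (X \<xi>)) \<eta> = cinner (C \<xi>) (adj D X \<eta>)}"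

definition wbicomm :: "'h::chilbert_space set \<Rightarrow> 'h set \<Rightarrow> ('h \<Rightarrow> 'h) set \<Rightarrow> ('h \<Rightarrow> 'h) set" where
  "wbicomm K D M = {X \<in> ldag D. \<forall>C\<in>wcomm K D M. \<forall>\<xi>\<in>D. \<forall>\<eta>\<in>D.
                      cinner (C (X \<xi>)) \<eta> = cinner (C \<xi>) (adj D X \<eta>)}"

definition reduced_alg :: "'h::chilbert_space set \<Rightarrow> ('h \<Rightarrow> 'h) \<Rightarrow> ('h \<Rightarrow> 'h) set \<Rightarrow> ('h \<Rightarrow> 'h) set" where
  "reduced_alg D E N = (\<lambda>X. (\<lambda>x. if x \<in> E ` D then X (E x) else 0)) ` N"

section \<open>The extension X_e on the space \<E> and the domain of its closure\<close>

definition ext_graph :: "'h::chilbert_space set \<Rightarrow> ('h \<Rightarrow> 'h) set \<Rightarrow> ('h \<Rightarrow> 'h) \<Rightarrow> ('h \<Rightarrow> 'h)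
                          \<Rightarrow> ('h \<Rightarrow> 'h) \<Rightarrow> ('h \<times> 'h) set" where
  "ext_graph D Mc E Z X = {(\<zeta>, w). \<exists>n (C :: nat \<Rightarrow> 'h \<Rightarrow> 'h) \<xi> \<eta>.
      (\<forall>k<n. C k \<in> Mc \<and> \<xi> k \<in> D) \<and> \<eta> \<in> D
      \<and> \<zeta> = (\<Sum>k<n. C k (E (\<xi> k))) + (\<eta> - Z \<eta>)
      \<and> w = (\<Sum>k<n. C k (X (E (\<xi> k))))}"

definition closure_dom :: "('h::chilbert_space \<times> 'h) set \<Rightarrow> 'h set" where
  "closure_dom G = {x. \<exists>f g. (\<forall>n. (f n, g n) \<in> G) \<and> f \<longlonglongrightarrow> x \<and> convergent g}"

end

theory Submission
  imports Defs
begin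

text \<open>Every \<open>X \<in> \<M>''\<^sub>w\<^sub>c\<close> commutes with \<open>E'\<close>, and its reduction lies in \<open>(\<M>\<^sub>E\<^sub>')''\<^sub>w\<^sub>c\<close> because
  \<open>C E'\<close> belongs to \<open>\<M>'\<^sub>w\<close> for every \<open>C\<close> in the weak commutant of \<open>\<M>\<^sub>E\<^sub>'\<close>.  Conversely, an
  element \<open>Y\<close> of \<open>(\<M>\<^sub>E\<^sub>')''\<^sub>w\<^sub>c\<close> commutes with the compressions \<open>E' C'\<^sup>* C E'\<close> of operators of
  \<open>\<M>'\<^sub>w\<close>; this makes \<open>Y\<^sub>e\<close> and \<open>(Y\<^sup>\<dagger>)\<^sub>e\<close> formally adjoint on \<open>\<E>\<close>, compatibly with \<open>\<M>'\<^sub>w\<close>.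
  Since \<open>\<parallel>Y\<^sub>e x\<parallel>\<^sup>2 + \<parallel>Y'\<^sub>e x\<parallel>\<^sup>2 = \<langle>x, (Y\<^sup>\<dagger>Y + Y'\<^sup>\<dagger>Y')\<^sub>e x\<rangle>\<close>, the domain hypothesis provides for each
  \<open>\<xi> \<in> \<D>\<close> approximations along which \<open>Y\<^sub>e\<close> and \<open>Y'\<^sub>e\<close> converge.  Hence the closure of \<open>Y\<^sub>e\<close> maps \<open>\<D>\<close>
  into the domains of all closures, i.e. into \<open>\<D>\<close>; it lies in \<open>\<M>''\<^sub>w\<^sub>c\<close> and reduces to \<open>Y\<close>.\<close>

section \<open>Complex inner product spaces\<close>

lemma scaleC_zero_left [simp]: "(0::complex) *\<^sub>C (x::'a::cvector) = 0"
  by (metis of_real_0 scaleR_scaleC scaleR_zero_left)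

lemma scaleC_minus_left: "(- a) *\<^sub>C x = - (a *\<^sub>C (x::'a::cvector))"
  by (metis add.inverse_unique add_cancel_right_left neg_eq_iff_add_eq_0 scaleC_add_left scaleC_zero_left)

lemma cinner_add_right: "cinner x (y + z) = cinner x y + cinner x (z::'a::cinner_space)"
  by (metis cinner_add_left cinner_commute complex_cnj_add)

lemma cinner_scaleC_right: "cinner x (a *\<^sub>C y) = cnj a * cinner x (y::'a::cinner_space)"
  by (metis cinner_commute cinner_scaleC_left complex_cnj_mult)

lemma cinner_zero_left [simp]: "cinner 0 (x::'a::cinner_space) = 0"
  by (metis add_cancel_right_right add_0 cinner_add_left)

lemma cinner_zero_right [simp]: "cinner x (0::'a::cinner_space) = 0"
  by (subst cinner_commute) simp

lemma cinner_minus_left: "cinner (- x) (y::'a::cinner_space) = - cinner x y"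
  by (metis add.right_inverse cinner_add_left cinner_zero_left eq_neg_iff_add_eq_0)

lemma cinner_minus_right: "cinner x (- y::'a::cinner_space) = - cinner x y"
  by (metis add.right_inverse cinner_add_right cinner_zero_right eq_neg_iff_add_eq_0)

lemma cinner_diff_left: "cinner (x - y) (z::'a::cinner_space) = cinner x z - cinner y z"
  by (simp only: diff_conv_add_uminus cinner_add_left cinner_minus_left)

lemma cinner_diff_right: "cinner x (y - z::'a::cinner_space) = cinner x y - cinner x z"
  by (simp only: diff_conv_add_uminus cinner_add_right cinner_minus_right)

lemma cinner_sum_left: "cinner (\<Sum>k\<in>A. f k) (y::'a::cinner_space) = (\<Sum>k\<in>A. cinner (f k) y)"
  by (induction A rule: infinite_finite_induct) (auto simp: cinner_add_left)

lemma cinner_sum_right: "cinner y (\<Sum>k\<in>A. f k) = (\<Sum>k\<in>A. cinner (y::'a::cinner_space) (f k))"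
  by (induction A rule: infinite_finite_induct) (auto simp: cinner_add_right)

lemma cinner_self_eq_norm_square: "cinner x x = complex_of_real ((norm (x::'a::cinner_space))\<^sup>2)"
  using norm_eq_sqrt_cinner[of x] cinner_self_nonneg[of x] cinner_self_real[of x]
  by (simp add: complex_eq_iff)

lemma Re_cinner_self: "Re (cinner x x) = (norm (x::'a::cinner_space))\<^sup>2"
  by (simp add: cinner_self_eq_norm_square)

lemma norm_diff_scaleC_square:
  "(norm (v - c *\<^sub>C w))\<^sup>2 = (norm v)\<^sup>2 - 2 * Re (cnj c * cinner v w) + (cmod c)\<^sup>2 * (norm (w::'a::cinner_space))\<^sup>2"
proof -
  have Re_swap: "Re (c * cinner w v) = Re (cnj c * cinner v w)"
    by (metis cinner_commute complex_cnj_cnj complex_cnj_mult cnj.sel(1))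
  have "Re (cinner (v - c *\<^sub>C w) (v - c *\<^sub>C w)) =
        Re (cinner v v) - Re (cnj c * cinner v w) - Re (c * cinner w v) + Re (c * cnj c * cinner w w)"
    by (simp add: cinner_diff_left cinner_diff_right cinner_scaleC_left cinner_scaleC_right algebra_simps)
  also have "Re (c * cnj c * cinner w w) = (cmod c)\<^sup>2 * (norm w)\<^sup>2"
    by (simp only: cinner_self_eq_norm_square flip: complex_norm_square of_real_mult) simp
  finally show ?thesis by (simp only: Re_cinner_self Re_swap)
qed

lemma norm_cinner_le: "cmod (cinner x y) \<le> norm x * norm (y::'a::cinner_space)"
proof (cases "y = 0")
  case False
  let ?a = "cinner x y"
  define t where "t = 1 / (norm y)\<^sup>2"
  have ny: "norm y > 0" using False by simp
  have "0 \<le> (norm (x - (of_real t * ?a) *\<^sub>C y))\<^sup>2" by simp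
  also have "\<dots> = (norm x)\<^sup>2 - 2 * Re (cnj (of_real t * ?a) * ?a) + (cmod (of_real t * ?a))\<^sup>2 * (norm y)\<^sup>2"
    by (rule norm_diff_scaleC_square)
  also have "cnj (of_real t * ?a) * ?a = of_real (t * (cmod ?a)\<^sup>2)"
    by (simp add: complex_norm_square mult.commute flip: of_real_power)
  also have "(cmod (of_real t * ?a))\<^sup>2 = t\<^sup>2 * (cmod ?a)\<^sup>2"
    by (simp add: norm_mult power_mult_distrib)
  also have "t\<^sup>2 * (cmod ?a)\<^sup>2 * (norm y)\<^sup>2 = t * (cmod ?a)\<^sup>2"
    using ny by (simp add: t_def power2_eq_square)
  finally have "t * (cmod ?a)\<^sup>2 \<le> (norm x)\<^sup>2" by simp
  then have "(cmod ?a)\<^sup>2 \<le> (norm x * norm y)\<^sup>2"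
    using ny by (simp add: t_def field_simps power_mult_distrib)
  then show ?thesis by (simp add: power2_le_iff_abs_le)
qed simp

lemma bounded_bilinear_cinner: "bounded_bilinear (cinner :: 'a::cinner_space \<Rightarrow> 'a \<Rightarrow> complex)"
proof
  fix a a' b b' :: 'a and r :: real
  show "cinner (a + a') b = cinner a b + cinner a' b" by (rule cinner_add_left)
  show "cinner a (b + b') = cinner a b + cinner a b'" by (rule cinner_add_right)
  show "cinner (r *\<^sub>R a) b = r *\<^sub>R cinner a b"
    by (simp add: scaleR_scaleC cinner_scaleC_left scaleC_complex_def)
  show "cinner a (r *\<^sub>R b) = r *\<^sub>R cinner a b"
    by (simp add: scaleR_scaleC cinner_scaleC_right scaleC_complex_def)
  show "\<exists>K. \<forall>a b. norm (cinner a b) \<le> norm (a::'a) * norm b * K"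
    by (rule exI[of _ 1]) (simp add: norm_cinner_le)
qed

lemmas tendsto_cinner = bounded_bilinear.tendsto[OF bounded_bilinear_cinner]

lemma cinner_tendsto_zero:
  assumes h: "\<And>n. cinner d (f n) = 0" and f: "f \<longlonglongrightarrow> y"
  shows "cinner d y = 0"
proof -
  have "(\<lambda>n. cinner d (f n)) \<longlonglongrightarrow> cinner d y" by (intro tendsto_cinner tendsto_const f)
  moreover have "(\<lambda>n. cinner d (f n)) \<longlonglongrightarrow> 0" using h by simp
  ultimately show ?thesis by (rule LIMSEQ_unique)
qed

lemma parallelogram_law:
  "(norm (a + b))\<^sup>2 + (norm (a - b))\<^sup>2 = 2 * (norm a)\<^sup>2 + 2 * (norm (b::'a::cinner_space))\<^sup>2"
proof -
  have "cinner (a + b) (a + b) + cinner (a - b) (a - b) = 2 * cinner a a + 2 * cinner b b"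
    by (simp add: cinner_add_left cinner_add_right cinner_diff_left cinner_diff_right algebra_simps)
  then have "complex_of_real ((norm (a + b))\<^sup>2 + (norm (a - b))\<^sup>2)
           = complex_of_real (2 * (norm a)\<^sup>2 + 2 * (norm b)\<^sup>2)"
    by (simp add: cinner_self_eq_norm_square)
  then show ?thesis by (simp only: of_real_eq_iff)
qed

lemma cinner_eq_right: "(\<And>x. cinner x a = cinner x b) \<Longrightarrow> a = (b::'a::cinner_space)"
  by (metis cinner_diff_right cinner_self_eq_zero diff_eq_diff_eq diff_self)

section \<open>Bounded operators, nearest points and the Riesz representation\<close>

lemma csubspace_zero: "csubspace N \<Longrightarrow> 0 \<in> N"
  and csubspace_add: "csubspace N \<Longrightarrow> a \<in> N \<Longrightarrow> b \<in> N \<Longrightarrow> a + b \<in> N"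
  and csubspace_scaleC: "csubspace N \<Longrightarrow> a \<in> N \<Longrightarrow> c *\<^sub>C a \<in> N"
  by (simp_all add: csubspace_def)

lemma csubspace_scaleR: "csubspace N \<Longrightarrow> a \<in> N \<Longrightarrow> r *\<^sub>R a \<in> N"
  by (simp add: scaleR_scaleC csubspace_scaleC)

lemma csubspace_diff: "csubspace N \<Longrightarrow> a \<in> N \<Longrightarrow> b \<in> N \<Longrightarrow> a - b \<in> N"
proof -
  assume N: "csubspace N" and ab: "a \<in> N" "b \<in> N"
  then have "a + (-1) *\<^sub>C b \<in> N" by (intro csubspace_add csubspace_scaleC)
  then show ?thesis by (simp add: scaleC_minus_left scaleC_one)
qed

lemma bops_add: "C \<in> bops UNIV \<Longrightarrow> C (x + y) = C x + C y"
  and bops_scaleC: "C \<in> bops UNIV \<Longrightarrow> C (a *\<^sub>C x) = a *\<^sub>C C x"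
  by (simp_all add: bops_def clinear_on_def)

lemma bops_zero: "C \<in> bops UNIV \<Longrightarrow> C 0 = 0"
  using bops_scaleC[of C 0 0] by simp

lemma bops_diff: "C \<in> bops UNIV \<Longrightarrow> C (x - y) = C x - C y"
proof -
  assume "C \<in> bops UNIV"
  then have "C (x - y) + C y = C x" by (simp flip: bops_add)
  then show ?thesis by (simp add: eq_diff_eq)
qed

lemma bops_sum: "C \<in> bops UNIV \<Longrightarrow> C (\<Sum>k\<in>A. f k) = (\<Sum>k\<in>A. C (f k))"
  by (induction A rule: infinite_finite_induct) (auto simp: bops_add bops_zero)

lemma bops_bound: "C \<in> bops UNIV \<Longrightarrow> \<exists>c\<ge>0. \<forall>x. norm (C x) \<le> c * norm x"
proof -
  assume "C \<in> bops UNIV"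
  then obtain c where c: "\<forall>x. norm (C x) \<le> c * norm x" by (auto simp: bops_def)
  have "norm (C x) \<le> max c 0 * norm x" for x
    using c[rule_format, of x] mult_right_mono[of c "max c 0" "norm x"] by simp
  then show ?thesis by (intro exI[of _ "max c 0"]) auto
qed

lemma bops_bounded_linear: "C \<in> bops UNIV \<Longrightarrow> bounded_linear C"
proof -
  assume C: "C \<in> bops UNIV"
  then obtain c where c: "\<forall>x. norm (C x) \<le> c * norm x" by (auto simp: bops_def)
  show ?thesis
    by (rule bounded_linear_intro[of _ c])
      (use C c in \<open>auto simp: bops_add scaleR_scaleC bops_scaleC mult.commute\<close>)
qed

lemma bops_tendsto: "C \<in> bops UNIV \<Longrightarrow> f \<longlonglongrightarrow> a \<Longrightarrow> (\<lambda>n. C (f n)) \<longlonglongrightarrow> C a"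
  using bops_bounded_linear bounded_linear.tendsto by blast

lemma bops_comp: "C \<in> bops UNIV \<Longrightarrow> C' \<in> bops UNIV \<Longrightarrow> C \<circ> C' \<in> bops UNIV"
proof -
  assume C: "C \<in> bops UNIV" and C': "C' \<in> bops UNIV"
  obtain c where c: "c \<ge> 0" "\<forall>x. norm (C x) \<le> c * norm x" using bops_bound[OF C] by auto
  obtain c' where c': "\<forall>x. norm (C' x) \<le> c' * norm x" using C' by (auto simp: bops_def)
  have "norm (C (C' x)) \<le> (c * c') * norm x" for x
  proof -
    have "norm (C (C' x)) \<le> c * norm (C' x)" using c by blast
    also have "\<dots> \<le> c * (c' * norm x)" using c c' by (simp add: mult_left_mono)
    finally show ?thesis by (simp add: mult.assoc)
  qed
  moreover have "clinear_on UNIV (C \<circ> C')" using C C' by (simp add: clinear_on_def bops_add bops_scaleC)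
  ultimately show ?thesis unfolding bops_def by auto
qed

lemma bops_id: "(\<lambda>x. x) \<in> bops UNIV"
  unfolding bops_def clinear_on_def by (auto intro!: exI[of _ 1])

lemma csubspace_near_minimizers_close:
  fixes N :: "'h::cinner_space set"
  assumes sub: "csubspace N" and low: "\<And>n. n \<in> N \<Longrightarrow> d \<le> (norm (x - n))\<^sup>2"
    and p: "p \<in> N" and q: "q \<in> N"
  shows "(norm (p - q))\<^sup>2 \<le> 2 * ((norm (x - p))\<^sup>2 - d) + 2 * ((norm (x - q))\<^sup>2 - d)"
proof -
  \<comment> \<open>the midpoint of \<open>p\<close> and \<open>q\<close> lies in \<open>N\<close>; apply the parallelogram law to \<open>x - p\<close> and \<open>x - q\<close>\<close>
  have "(1/2::real) *\<^sub>R (p + q) \<in> N"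
    by (intro csubspace_scaleR[OF sub] csubspace_add[OF sub] p q)
  then have "4 * d \<le> 4 * (norm (x - (1/2::real) *\<^sub>R (p + q)))\<^sup>2" using low by simp
  also have "\<dots> = (norm ((x - p) + (x - q)))\<^sup>2"
  proof -
    have "(x - p) + (x - q) = 2 *\<^sub>R (x - (1/2::real) *\<^sub>R (p + q))"
      by (simp add: scaleR_diff_right scaleR_2 algebra_simps)
    then show ?thesis by (simp add: power_mult_distrib)
  qed
  finally show ?thesis
    using parallelogram_law[of "x - p" "x - q"] by (simp add: norm_minus_commute)
qed

lemma closed_csubspace_nearest_point:
  fixes N :: "'h::chilbert_space set"
  assumes cl: "closed N" and sub: "csubspace N"
  shows "\<exists>q\<in>N. \<forall>n\<in>N. norm (x - q) \<le> norm (x - n)"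
proof -
  define d where "d = Inf ((\<lambda>n. (norm (x - n))\<^sup>2) ` N)"
  have ne: "(\<lambda>n. (norm (x - n))\<^sup>2) ` N \<noteq> {}" using csubspace_zero[OF sub] by blast
  have bdd: "bdd_below ((\<lambda>n. (norm (x - n))\<^sup>2) ` N)" by (auto intro!: bdd_belowI[of _ 0])
  have low: "d \<le> (norm (x - n))\<^sup>2" if "n \<in> N" for n
    unfolding d_def using that bdd by (auto intro: cInf_lower)
  have "\<exists>p\<in>N. (norm (x - p))\<^sup>2 < d + 1 / Suc k" for k
    using cInf_less_iff[OF ne bdd, of "d + 1 / Suc k"] by (auto simp: d_def)
  then obtain p where pN: "\<And>k. p k \<in> N" and pd: "\<And>k. (norm (x - p k))\<^sup>2 < d + 1 / Suc k"
    by metis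
  have close: "(norm (p k - p j))\<^sup>2 \<le> 2 * (1 / Suc k) + 2 * (1 / Suc j)" for k j
  proof -
    have "(norm (p k - p j))\<^sup>2 \<le> 2 * ((norm (x - p k))\<^sup>2 - d) + 2 * ((norm (x - p j))\<^sup>2 - d)"
      by (rule csubspace_near_minimizers_close[OF sub]) (use low pN in auto)
    then show ?thesis using pd[of k] pd[of j] by argo
  qed
  have "Cauchy p"
  proof (rule CauchyI)
    fix e :: real assume e: "0 < e"
    have "e\<^sup>2 / 4 > 0" using e by simp
    then obtain M where M: "inverse (real (Suc M)) < e\<^sup>2 / 4" using reals_Archimedean by blast
    have "norm (p m - p n) < e" if "m \<ge> M" "n \<ge> M" for m n
    proof -
      have "1 / Suc m \<le> inverse (real (Suc M))" "1 / Suc n \<le> inverse (real (Suc M))"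
        using that by (simp_all add: divide_inverse le_imp_inverse_le)
      then have "(norm (p m - p n))\<^sup>2 < e\<^sup>2" using close[of m n] M by linarith
      then show ?thesis using e by (simp add: power_less_imp_less_base)
    qed
    then show "\<exists>M. \<forall>m\<ge>M. \<forall>n\<ge>M. norm (p m - p n) < e" by blast
  qed
  then obtain q where pq: "p \<longlonglongrightarrow> q" by (auto simp: Cauchy_convergent_iff convergent_def)
  have qN: "q \<in> N" using closed_sequentially[OF cl] pN pq by blast
  have "(norm (x - q))\<^sup>2 \<le> d"
  proof (rule LIMSEQ_le)
    show "(\<lambda>k. (norm (x - p k))\<^sup>2) \<longlonglongrightarrow> (norm (x - q))\<^sup>2" by (intro tendsto_intros pq)
    show "(\<lambda>k. d + 1 / Suc k) \<longlonglongrightarrow> d"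
      using tendsto_add[OF tendsto_const LIMSEQ_inverse_real_of_nat, of d] by (simp add: divide_inverse)
    show "\<exists>N. \<forall>n\<ge>N. (norm (x - p n))\<^sup>2 \<le> d + 1 / Suc n" using pd less_imp_le by blast
  qed
  then have "norm (x - q) \<le> norm (x - n)" if "n \<in> N" for n
    using low[OF that] by (meson norm_ge_zero order_trans power2_le_imp_le)
  then show ?thesis using qN by blast
qed

lemma nearest_point_orthogonal:
  fixes N :: "'h::cinner_space set"
  assumes sub: "csubspace N" and qN: "q \<in> N"
    and best: "\<And>m. m \<in> N \<Longrightarrow> norm (x - q) \<le> norm (x - m)" and nN: "n \<in> N"
  shows "cinner n (x - q) = 0"
proof (rule ccontr)
  define w where "w = x - q"
  let ?a = "cinner w n"
  assume "cinner n (x - q) \<noteq> 0"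
  then have a0: "?a \<noteq> 0" by (metis cinner_commute complex_cnj_zero w_def)
  define t where "t = 1 / ((norm n)\<^sup>2 + 1)"
  have t0: "t > 0" by (simp add: t_def add_nonneg_pos)
  define c where "c = of_real t * ?a"
  \<comment> \<open>moving from \<open>q\<close> towards \<open>q + c n\<close> would decrease the distance to \<open>x\<close>\<close>
  have "q + c *\<^sub>C n \<in> N" by (intro csubspace_add[OF sub] csubspace_scaleC[OF sub] qN nN)
  then have "(norm w)\<^sup>2 \<le> (norm (w - c *\<^sub>C n))\<^sup>2"
    using best by (simp add: w_def diff_diff_eq power_mono)
  also have "\<dots> = (norm w)\<^sup>2 - 2 * Re (cnj c * ?a) + (cmod c)\<^sup>2 * (norm n)\<^sup>2"
    by (rule norm_diff_scaleC_square)
  also have "cnj c * ?a = of_real (t * (cmod ?a)\<^sup>2)"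
    by (simp add: c_def complex_norm_square mult.commute flip: of_real_power)
  also have "(cmod c)\<^sup>2 = t\<^sup>2 * (cmod ?a)\<^sup>2"
    by (simp add: c_def norm_mult power_mult_distrib)
  finally have "2 * (t * (cmod ?a)\<^sup>2) \<le> (t * (cmod ?a)\<^sup>2) * (t * (norm n)\<^sup>2)"
    by (simp add: power2_eq_square algebra_simps)
  moreover have "t * (cmod ?a)\<^sup>2 > 0" using t0 a0 by simp
  ultimately have "2 \<le> t * (norm n)\<^sup>2"
    by (metis mult.commute mult_le_cancel_left_pos)
  moreover have "t * (norm n)\<^sup>2 < 1"
    by (simp add: t_def add_nonneg_pos divide_less_eq)
  ultimately show False by simp
qed

lemma closed_csubspace_orthogonal_vector:
  fixes N :: "'h::chilbert_space set"
  assumes "closed N" and sub: "csubspace N" and "x \<notin> N"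
  shows "\<exists>w. w \<noteq> 0 \<and> (\<forall>n\<in>N. cinner n w = 0)"
proof -
  obtain q where "q \<in> N" and "\<forall>n\<in>N. norm (x - q) \<le> norm (x - n)"
    using closed_csubspace_nearest_point assms by blast
  then show ?thesis
    using nearest_point_orthogonal[OF sub] \<open>x \<notin> N\<close> by (intro exI[of _ "x - q"]) auto
qed

lemma riesz_representation:
  fixes \<phi> :: "'h::chilbert_space \<Rightarrow> complex"
  assumes add: "\<And>x y. \<phi> (x + y) = \<phi> x + \<phi> y"
    and sc: "\<And>c x. \<phi> (c *\<^sub>C x) = c * \<phi> x"
    and bd: "\<And>x. cmod (\<phi> x) \<le> K * norm x"
  shows "\<exists>z. \<forall>x. \<phi> x = cinner x z"
proof (cases "\<forall>x. \<phi> x = 0")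
  case True then show ?thesis by (intro exI[of _ 0]) simp
next
  case False
  then obtain x0 where x0: "\<phi> x0 \<noteq> 0" by auto
  have "bounded_linear \<phi>"
  proof (rule bounded_linear_intro[of _ K])
    show "\<phi> (r *\<^sub>R x) = r *\<^sub>R \<phi> x" for r x by (simp add: scaleR_scaleC sc scaleC_complex_def)
    show "norm (\<phi> x) \<le> norm x * K" for x using bd[of x] by (simp add: mult.commute)
  qed (rule add)
  then have "closed {x. \<phi> x = 0}"
    by (intro closed_Collect_eq) (auto intro: linear_continuous_on)
  moreover have "csubspace {x. \<phi> x = 0}"
    using sc[of 0 0] unfolding csubspace_def by (simp add: add sc)
  ultimately obtain w where w0: "w \<noteq> 0" and wo: "\<And>n. \<phi> n = 0 \<Longrightarrow> cinner n w = 0"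
    using closed_csubspace_orthogonal_vector[of "{x. \<phi> x = 0}" x0] x0 by auto
  have ww: "cinner w w \<noteq> 0" using w0 cinner_self_eq_zero by blast
  have pw: "\<phi> w \<noteq> 0" using wo ww by blast
  \<comment> \<open>\<open>x - (\<phi> x / \<phi> w) w\<close> lies in the kernel, hence is orthogonal to \<open>w\<close>\<close>
  have "\<phi> x = cinner x (cnj (\<phi> w / cinner w w) *\<^sub>C w)" for x
  proof -
    let ?y = "(\<phi> x / \<phi> w) *\<^sub>C w"
    have "\<phi> x = \<phi> (x - ?y) + \<phi> ?y" using add[of "x - ?y" ?y] by simp
    moreover have "\<phi> ?y = \<phi> x" using pw by (simp add: sc)
    ultimately have "cinner (x - ?y) w = 0" by (intro wo) simp
    then have "cinner x w = (\<phi> x / \<phi> w) * cinner w w"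
      by (simp add: cinner_diff_left cinner_scaleC_left)
    then show ?thesis using ww pw by (simp add: cinner_scaleC_right)
  qed
  then show ?thesis by blast
qed

definition cadj :: "('h::chilbert_space \<Rightarrow> 'h) \<Rightarrow> 'h \<Rightarrow> 'h" where
  "cadj C y = (SOME z. \<forall>x. cinner (C x) y = cinner x z)"

lemma cinner_cadj_right: assumes C: "C \<in> bops UNIV" shows "cinner (C x) y = cinner x (cadj C y)"
proof -
  obtain c where c: "c \<ge> 0" "\<forall>x. norm (C x) \<le> c * norm x" using bops_bound[OF C] by auto
  have "\<exists>z. \<forall>x. cinner (C x) y = cinner x z"
  proof (rule riesz_representation)
    show "cinner (C (x + x')) y = cinner (C x) y + cinner (C x') y" for x x'
      using C by (simp add: bops_add cinner_add_left)
    show "cinner (C (a *\<^sub>C x)) y = a * cinner (C x) y" for a x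
      using C by (simp add: bops_scaleC cinner_scaleC_left)
    show "cmod (cinner (C x) y) \<le> c * norm y * norm x" for x
    proof -
      have "cmod (cinner (C x) y) \<le> norm (C x) * norm y" by (rule norm_cinner_le)
      also have "\<dots> \<le> c * norm x * norm y" using c by (simp add: mult_right_mono)
      finally show ?thesis by (simp add: algebra_simps)
    qed
  qed
  then show ?thesis unfolding cadj_def by (rule someI_ex[THEN spec])
qed

lemma cinner_cadj_left: "C \<in> bops UNIV \<Longrightarrow> cinner (cadj C y) x = cinner y (C x)"
  by (metis cinner_cadj_right cinner_commute)

lemma cadj_bops: assumes C: "C \<in> bops UNIV" shows "cadj C \<in> bops UNIV"
proof -
  obtain c where c: "c \<ge> 0" "\<forall>x. norm (C x) \<le> c * norm x" using bops_bound[OF C] by auto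
  have lin1: "cadj C (y + z) = cadj C y + cadj C z" for y z
    by (rule cinner_eq_right) (simp add: cinner_cadj_right[OF C, symmetric] cinner_add_right)
  have lin2: "cadj C (a *\<^sub>C y) = a *\<^sub>C cadj C y" for a y
    by (rule cinner_eq_right) (simp add: cinner_cadj_right[OF C, symmetric] cinner_scaleC_right)
  have bd: "norm (cadj C y) \<le> c * norm y" for y
  proof -
    let ?z = "cadj C y"
    have "(norm ?z)\<^sup>2 = Re (cinner (C ?z) y)" by (simp add: Re_cinner_self cinner_cadj_right[OF C])
    also have "\<dots> \<le> norm (C ?z) * norm y" using complex_Re_le_cmod norm_cinner_le order_trans by blast
    also have "\<dots> \<le> norm ?z * (c * norm y)"
      using c mult_right_mono[of "norm (C ?z)" "c * norm ?z" "norm y"] by (simp add: algebra_simps)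
    finally show ?thesis by (cases "?z = 0") (use c in \<open>auto simp: power2_eq_square\<close>)
  qed
  show ?thesis by (auto simp: bops_def clinear_on_def lin1 lin2 intro!: exI[of _ c] bd)
qed

lemma Cauchy_if_square_bounded:
  fixes u z v :: "nat \<Rightarrow> 'a::real_normed_vector"
  assumes z: "Cauchy z" and v: "Bseq v"
    and bd: "\<And>n m. (norm (u n - u m))\<^sup>2 \<le> norm (z n - z m) * norm (v n - v m)"
  shows "Cauchy u"
proof (rule CauchyI)
  fix e :: real assume e: "0 < e"
  obtain K where K: "K > 0" "\<And>n. norm (v n) \<le> K" using v by (auto elim: BseqE)
  define d where "d = e\<^sup>2 / (2 * K + 1)"
  have d: "d > 0" using e K by (simp add: d_def)
  obtain N where N: "\<forall>m\<ge>N. \<forall>n\<ge>N. norm (z m - z n) < d" using z d by (auto simp: Cauchy_iff)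
  have "norm (u m - u n) < e" if "m \<ge> N" "n \<ge> N" for m n
  proof -
    have "norm (v m - v n) \<le> 2 * K"
      using norm_triangle_ineq4[of "v m" "v n"] K(2)[of m] K(2)[of n] by linarith
    then have "(norm (u m - u n))\<^sup>2 \<le> d * (2 * K)"
      using bd[of m n] N that d by (smt (verit) mult_mono norm_ge_zero)
    also have "\<dots> < e\<^sup>2" using d K by (simp add: d_def field_simps)
    finally show ?thesis using e by (simp add: power_less_imp_less_base)
  qed
  then show "\<exists>N. \<forall>m\<ge>N. \<forall>n\<ge>N. norm (u m - u n) < e" by blast
qed

section \<open>Adjoints relative to a dense domain\<close>

text \<open>Separation makes the definite description in \<open>adj\<close> pick the unique adjoint value.\<close>
definition cinner_separating :: "'h::chilbert_space set \<Rightarrow> bool" where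
  "cinner_separating T \<longleftrightarrow> (\<forall>a\<in>T. \<forall>b\<in>T. (\<forall>\<xi>\<in>T. cinner \<xi> a = cinner \<xi> b) \<longrightarrow> a = b)"

lemma dense_cinner_eq:
  fixes D :: "'h::chilbert_space set"
  assumes dense: "closure D = UNIV" and h: "\<And>\<eta>. \<eta> \<in> D \<Longrightarrow> cinner a \<eta> = cinner b \<eta>"
  shows "a = b"
proof -
  obtain f where f: "\<And>n. f n \<in> D" "f \<longlonglongrightarrow> a - b"
    using dense closure_sequential by (metis UNIV_I)
  have "(\<lambda>n. cinner (a - b) (f n)) \<longlonglongrightarrow> cinner (a - b) (a - b)"
    by (intro tendsto_cinner tendsto_const f)
  moreover have "(\<lambda>n. cinner (a - b) (f n)) = (\<lambda>n. 0)" using h f by (simp add: cinner_diff_left)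
  ultimately have "cinner (a - b) (a - b) = 0" using LIMSEQ_const_iff by metis
  then show ?thesis using cinner_self_eq_zero[of "a - b"] by simp
qed

lemma cinner_separating_dense: "closure D = UNIV \<Longrightarrow> cinner_separating D"
  unfolding cinner_separating_def
  by (metis cinner_commute dense_cinner_eq)

lemma adj_characterization:
  assumes sep: "cinner_separating T" and X: "X \<in> ldag T" and eta: "\<eta> \<in> T"
  shows "adj T X \<eta> \<in> T \<and> (\<forall>\<xi>\<in>T. cinner (X \<xi>) \<eta> = cinner \<xi> (adj T X \<eta>))"
proof -
  obtain \<zeta> where z: "\<zeta> \<in> T" "\<forall>\<xi>\<in>T. cinner (X \<xi>) \<eta> = cinner \<xi> \<zeta>"
    using X eta unfolding ldag_def by blast
  have "(THE \<zeta>. \<zeta> \<in> T \<and> (\<forall>\<xi>\<in>T. cinner (X \<xi>) \<eta> = cinner \<xi> \<zeta>)) = \<zeta>"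
    by (rule the_equality) (use z sep in \<open>auto simp: cinner_separating_def\<close>)
  then show ?thesis using z eta by (simp add: adj_def)
qed

lemma adj_outside: "\<eta> \<notin> T \<Longrightarrow> adj T X \<eta> = 0"
  by (simp add: adj_def)

lemma adj_mem: "cinner_separating T \<Longrightarrow> X \<in> ldag T \<Longrightarrow> \<eta> \<in> T \<Longrightarrow> adj T X \<eta> \<in> T"
  using adj_characterization by blast

lemma cinner_adj_right:
  "cinner_separating T \<Longrightarrow> X \<in> ldag T \<Longrightarrow> \<eta> \<in> T \<Longrightarrow> \<xi> \<in> T \<Longrightarrow>
   cinner (X \<xi>) \<eta> = cinner \<xi> (adj T X \<eta>)"
  using adj_characterization by blast

lemma cinner_adj_left:
  "cinner_separating T \<Longrightarrow> X \<in> ldag T \<Longrightarrow> \<eta> \<in> T \<Longrightarrow> \<xi> \<in> T \<Longrightarrow>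
   cinner (adj T X \<eta>) \<xi> = cinner \<eta> (X \<xi>)"
  by (metis cinner_adj_right cinner_commute)

lemma adj_unique:
  assumes sep: "cinner_separating T" and X: "X \<in> ldag T" and "\<eta> \<in> T" "\<zeta> \<in> T"
    and "\<forall>\<xi>\<in>T. cinner (X \<xi>) \<eta> = cinner \<xi> \<zeta>"
  shows "adj T X \<eta> = \<zeta>"
  using assms adj_characterization[OF sep X] unfolding cinner_separating_def by (metis adj_mem)

lemma ldag_add: "X \<in> ldag T \<Longrightarrow> a \<in> T \<Longrightarrow> b \<in> T \<Longrightarrow> X (a + b) = X a + X b"
  and ldag_scaleC: "X \<in> ldag T \<Longrightarrow> a \<in> T \<Longrightarrow> X (c *\<^sub>C a) = c *\<^sub>C X a"
  and ldag_mem: "X \<in> ldag T \<Longrightarrow> a \<in> T \<Longrightarrow> X a \<in> T"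
  and ldag_outside: "X \<in> ldag T \<Longrightarrow> a \<notin> T \<Longrightarrow> X a = 0"
  unfolding ldag_def clinear_on_def by blast+

lemma ldag_zero: "X \<in> ldag T \<Longrightarrow> X 0 = 0"
  by (metis ldag_outside ldag_scaleC scaleC_zero_left)

lemma ldagI:
  assumes "clinear_on T X" "\<And>a. a \<in> T \<Longrightarrow> X a \<in> T"
    and "\<And>\<eta>. \<eta> \<in> T \<Longrightarrow> A \<eta> \<in> T" "\<And>\<xi> \<eta>. \<xi> \<in> T \<Longrightarrow> \<eta> \<in> T \<Longrightarrow> cinner (X \<xi>) \<eta> = cinner \<xi> (A \<eta>)"
    and "\<And>x. x \<notin> T \<Longrightarrow> X x = 0"
  shows "X \<in> ldag T"
  using assms unfolding ldag_def by blast

lemma adj_ldag: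
  assumes sep: "cinner_separating T" and sub: "csubspace T" and X: "X \<in> ldag T"
  shows "adj T X \<in> ldag T"
proof (rule ldagI)
  have "adj T X (a + b) = adj T X a + adj T X b" if "a \<in> T" "b \<in> T" for a b
    using that by (intro adj_unique[OF sep X] csubspace_add[OF sub] adj_mem[OF sep X])
      (simp_all add: cinner_add_right cinner_adj_right[OF sep X])
  moreover have "adj T X (c *\<^sub>C a) = c *\<^sub>C adj T X a" if "a \<in> T" for c a
    using that by (intro adj_unique[OF sep X] csubspace_scaleC[OF sub] adj_mem[OF sep X])
      (simp_all add: cinner_scaleC_right cinner_adj_right[OF sep X])
  ultimately show "clinear_on T (adj T X)" unfolding clinear_on_def by blast
  show "cinner (adj T X \<xi>) \<eta> = cinner \<xi> (X \<eta>)" if "\<xi> \<in> T" "\<eta> \<in> T" for \<xi> \<eta>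
    using that by (rule cinner_adj_left[OF sep X])
qed (simp_all add: adj_mem[OF sep X] ldag_mem[OF X] adj_outside)

lemma adj_adj:
  assumes sep: "cinner_separating T" and sub: "csubspace T" and X: "X \<in> ldag T" and \<xi>: "\<xi> \<in> T"
  shows "adj T (adj T X) \<xi> = X \<xi>"
  by (rule adj_unique[OF sep adj_ldag[OF sep sub X] \<xi> ldag_mem[OF X \<xi>]])
    (simp add: cinner_adj_left[OF sep X] \<xi>)

lemma ldag_comp:
  assumes sep: "cinner_separating T" and X: "X \<in> ldag T" and Y: "Y \<in> ldag T"
  shows "X \<circ> Y \<in> ldag T" and "\<eta> \<in> T \<Longrightarrow> adj T (X \<circ> Y) \<eta> = adj T Y (adj T X \<eta>)"
proof -
  have adj: "cinner ((X \<circ> Y) \<xi>) \<eta> = cinner \<xi> (adj T Y (adj T X \<eta>))" if "\<xi> \<in> T" "\<eta> \<in> T" for \<xi> \<eta>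
    using that by (simp add: cinner_adj_right[OF sep X] cinner_adj_right[OF sep Y]
        adj_mem[OF sep X] ldag_mem[OF Y])
  show XY: "X \<circ> Y \<in> ldag T"
    by (rule ldagI[OF _ _ _ adj])
      (auto simp: clinear_on_def ldag_add[OF X] ldag_add[OF Y] ldag_scaleC[OF X] ldag_scaleC[OF Y]
        ldag_mem[OF X] ldag_mem[OF Y] adj_mem[OF sep X] adj_mem[OF sep Y] ldag_outside[OF Y] ldag_zero[OF X])
  show "\<eta> \<in> T \<Longrightarrow> adj T (X \<circ> Y) \<eta> = adj T Y (adj T X \<eta>)"
    using adj by (intro adj_unique[OF sep XY]) (auto simp: adj_mem[OF sep X] adj_mem[OF sep Y])
qed

lemma ldag_plus:
  assumes sep: "cinner_separating T" and sub: "csubspace T" and X: "X \<in> ldag T" and Y: "Y \<in> ldag T"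
  shows "(\<lambda>x. X x + Y x) \<in> ldag T" and "\<eta> \<in> T \<Longrightarrow> adj T (\<lambda>x. X x + Y x) \<eta> = adj T X \<eta> + adj T Y \<eta>"
proof -
  have adj: "cinner (X \<xi> + Y \<xi>) \<eta> = cinner \<xi> (adj T X \<eta> + adj T Y \<eta>)" if "\<xi> \<in> T" "\<eta> \<in> T" for \<xi> \<eta>
    using that by (simp add: cinner_adj_right[OF sep X] cinner_adj_right[OF sep Y]
        cinner_add_left cinner_add_right)
  show XY: "(\<lambda>x. X x + Y x) \<in> ldag T"
    by (rule ldagI[OF _ _ _ adj])
      (auto simp: clinear_on_def ldag_add[OF X] ldag_add[OF Y] ldag_scaleC[OF X] ldag_scaleC[OF Y]
        scaleC_add_right ldag_mem[OF X] ldag_mem[OF Y] adj_mem[OF sep X] adj_mem[OF sep Y]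
        ldag_outside[OF X] ldag_outside[OF Y] csubspace_add[OF sub])
  show "\<eta> \<in> T \<Longrightarrow> adj T (\<lambda>x. X x + Y x) \<eta> = adj T X \<eta> + adj T Y \<eta>"
    using adj by (intro adj_unique[OF sep XY])
      (auto simp: adj_mem[OF sep X] adj_mem[OF sep Y] csubspace_add[OF sub])
qed

lemma bops_add_on: "C \<in> bops K \<Longrightarrow> x \<in> K \<Longrightarrow> y \<in> K \<Longrightarrow> C (x + y) = C x + C y"
  unfolding bops_def clinear_on_def by blast

lemma wcomm_bops: "C \<in> wcomm K T N \<Longrightarrow> C \<in> bops K"
  by (simp add: wcomm_def)

lemma wbicomm_ldag: "X \<in> wbicomm K T N \<Longrightarrow> X \<in> ldag T"
  by (simp add: wbicomm_def)

lemma wbicommD: "X \<in> wbicomm K T N \<Longrightarrow> C \<in> wcomm K T N \<Longrightarrow> \<xi> \<in> T \<Longrightarrow> \<eta> \<in> T \<Longrightarrow>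
   cinner (C (X \<xi>)) \<eta> = cinner (C \<xi>) (adj T X \<eta>)"
  unfolding wbicomm_def by blast

lemma wbicomm_comp:
  assumes sep: "cinner_separating T" and X: "X \<in> wbicomm K T N" and Y: "Y \<in> wbicomm K T N"
  shows "X \<circ> Y \<in> wbicomm K T N"
proof -
  note XL = wbicomm_ldag[OF X] and YL = wbicomm_ldag[OF Y]
  have "cinner (C (X (Y \<xi>))) \<eta> = cinner (C \<xi>) (adj T (X \<circ> Y) \<eta>)"
    if "C \<in> wcomm K T N" "\<xi> \<in> T" "\<eta> \<in> T" for C \<xi> \<eta>
    using that by (simp add: wbicommD[OF X] wbicommD[OF Y] ldag_mem[OF YL] adj_mem[OF sep XL]
        ldag_comp(2)[OF sep XL YL])
  then show ?thesis using ldag_comp(1)[OF sep XL YL] by (simp add: wbicomm_def)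
qed

lemma wbicomm_plus:
  assumes sep: "cinner_separating T" and sub: "csubspace T" and TK: "T \<subseteq> K"
    and X: "X \<in> wbicomm K T N" and Y: "Y \<in> wbicomm K T N"
  shows "(\<lambda>x. X x + Y x) \<in> wbicomm K T N"
proof -
  note XL = wbicomm_ldag[OF X] and YL = wbicomm_ldag[OF Y]
  have "cinner (C (X \<xi> + Y \<xi>)) \<eta> = cinner (C \<xi>) (adj T (\<lambda>x. X x + Y x) \<eta>)"
    if C: "C \<in> wcomm K T N" and "\<xi> \<in> T" "\<eta> \<in> T" for C \<xi> \<eta>
  proof -
    have "C (X \<xi> + Y \<xi>) = C (X \<xi>) + C (Y \<xi>)"
      using TK ldag_mem[OF XL] ldag_mem[OF YL] \<open>\<xi> \<in> T\<close>
      by (intro bops_add_on[OF wcomm_bops[OF C]]) auto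
    then show ?thesis
      using that by (simp add: cinner_add_left cinner_add_right wbicommD[OF X] wbicommD[OF Y]
          ldag_plus(2)[OF sep sub XL YL])
  qed
  then show ?thesis using ldag_plus(1)[OF sep sub XL YL] by (simp add: wbicomm_def)
qed

lemma weak_commutation_imp_commute:
  assumes dense: "closure D = UNIV" and X: "X \<in> ldag D" and "\<And>\<xi>. \<xi> \<in> D \<Longrightarrow> C \<xi> \<in> D"
    and "\<And>\<xi> \<eta>. \<xi> \<in> D \<Longrightarrow> \<eta> \<in> D \<Longrightarrow> cinner (C (X \<xi>)) \<eta> = cinner (C \<xi>) (adj D X \<eta>)"
    and "\<xi> \<in> D"
  shows "C (X \<xi>) = X (C \<xi>)"
  using assms by (intro dense_cinner_eq[OF dense])
    (simp add: cinner_adj_right[OF cinner_separating_dense[OF dense] X])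

section \<open>Reduction by a projection of the weak commutant\<close>

definition reduce :: "'h::chilbert_space set \<Rightarrow> ('h \<Rightarrow> 'h) \<Rightarrow> ('h \<Rightarrow> 'h) \<Rightarrow> ('h \<Rightarrow> 'h)" where
  "reduce D E X = (\<lambda>x. if x \<in> E ` D then X (E x) else 0)"

lemma reduced_alg_eq_image: "reduced_alg D E N = reduce D E ` N"
  by (simp add: reduced_alg_def reduce_def)

locale reduction =
  fixes D :: "'h::chilbert_space set" and M :: "('h \<Rightarrow> 'h) set" and E :: "'h \<Rightarrow> 'h"
  assumes D_sub: "csubspace D"
    and D_dense: "closure D = UNIV"
    and M_Ostar: "is_Ostar_algebra D M"
    and Mc_inv: "\<forall>C\<in>wcomm UNIV D M. C ` D \<subseteq> D"
    and E_proj: "is_proj UNIV E"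
    and E_comm: "E \<in> wcomm UNIV D M"
begin

text \<open>In the notation of the paper: \<open>Mc = \<M>'\<^sub>w\<close>, \<open>ED = E'\<D>\<close>, \<open>Mr = \<M>\<^sub>E\<^sub>'\<close>, and \<open>Cr\<close>, \<open>Br\<close> are
  the weak commutant and the unbounded bicommutant of \<open>\<M>\<^sub>E\<^sub>'\<close> in \<open>E'\<H>\<close>.\<close>
abbreviation "Mc \<equiv> wcomm UNIV D M"
abbreviation "ED \<equiv> E ` D"
abbreviation "Mr \<equiv> reduced_alg D E M"
abbreviation "Cr \<equiv> wcomm (range E) ED Mr"
abbreviation "Br \<equiv> wbicomm (range E) ED Mr"

lemmas sep_D = cinner_separating_dense[OF D_dense]

lemma E_bops: "E \<in> bops UNIV"
  and E_idem [simp]: "E (E x) = E x"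
  and E_selfadj: "cinner (E x) y = cinner x (E y)"
  using E_proj by (simp_all add: is_proj_def)

lemma Mc_bops: "C \<in> Mc \<Longrightarrow> C \<in> bops UNIV"
  by (simp add: wcomm_def)

lemma Mc_D: "C \<in> Mc \<Longrightarrow> \<xi> \<in> D \<Longrightarrow> C \<xi> \<in> D"
  using Mc_inv by blast

lemma Mc_weak_comm: "C \<in> Mc \<Longrightarrow> X \<in> M \<Longrightarrow> \<xi> \<in> D \<Longrightarrow> \<eta> \<in> D \<Longrightarrow>
    cinner (C (X \<xi>)) \<eta> = cinner (C \<xi>) (adj D X \<eta>)"
  by (simp add: wcomm_def)

lemma M_ldag: "X \<in> M \<Longrightarrow> X \<in> ldag D"
  and M_adj: "X \<in> M \<Longrightarrow> adj D X \<in> M"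
  using M_Ostar by (auto simp: is_Ostar_algebra_def)

lemma Mc_commute: "C \<in> Mc \<Longrightarrow> X \<in> M \<Longrightarrow> \<xi> \<in> D \<Longrightarrow> C (X \<xi>) = X (C \<xi>)"
  by (rule weak_commutation_imp_commute[OF D_dense]) (auto simp: M_ldag Mc_D Mc_weak_comm)

lemma Mc_comp: assumes C: "C \<in> Mc" and C': "C' \<in> Mc" shows "C \<circ> C' \<in> Mc"
  using C C' by (simp add: wcomm_def bops_comp Mc_commute[OF C'] Mc_weak_comm[OF C] Mc_D[OF C'])

lemma Mc_id: "(\<lambda>x. x) \<in> Mc"
  by (simp add: wcomm_def bops_id cinner_adj_right[OF sep_D] M_ldag)

lemma Mc_cadj: assumes C: "C \<in> Mc" shows "cadj C \<in> Mc"
proof -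
  have CB: "C \<in> bops UNIV" by (rule Mc_bops[OF C])
  have "cinner (cadj C (X \<xi>)) \<eta> = cinner (cadj C \<xi>) (adj D X \<eta>)"
    if X: "X \<in> M" and \<xi>: "\<xi> \<in> D" and \<eta>: "\<eta> \<in> D" for X \<xi> \<eta>
  proof -
    have "cinner (cadj C (X \<xi>)) \<eta> = cinner (X \<xi>) (C \<eta>)" by (rule cinner_cadj_left[OF CB])
    also have "\<dots> = cinner \<xi> (adj D X (C \<eta>))"
      by (rule cinner_adj_right[OF sep_D M_ldag[OF X] Mc_D[OF C \<eta>] \<xi>])
    also have "adj D X (C \<eta>) = C (adj D X \<eta>)" using Mc_commute[OF C M_adj[OF X] \<eta>] by simp
    finally show ?thesis by (simp add: cinner_cadj_left[OF CB])
  qed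
  then show ?thesis using cadj_bops[OF CB] by (simp add: wcomm_def)
qed

lemma ED_D: "x \<in> ED \<Longrightarrow> x \<in> D"
  using Mc_D[OF E_comm] by auto

lemma csubspace_ED: "csubspace ED"
proof -
  have "0 \<in> ED" using bops_zero[OF E_bops] csubspace_zero[OF D_sub] by force
  moreover have "x + y \<in> ED" if "x \<in> ED" "y \<in> ED" for x y
    using that csubspace_add[OF D_sub] by (auto simp flip: bops_add[OF E_bops])
  moreover have "c *\<^sub>C x \<in> ED" if "x \<in> ED" for c x
    using that csubspace_scaleC[OF D_sub] by (auto simp flip: bops_scaleC[OF E_bops])
  ultimately show ?thesis unfolding csubspace_def by blast
qed

lemma csubspace_range_E: "csubspace (range E)"
  unfolding csubspace_def
proof (intro conjI ballI allI)
  show "0 \<in> range E" using bops_zero[OF E_bops] by (metis rangeI)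
  show "x + y \<in> range E" if "x \<in> range E" "y \<in> range E" for x y
    using that by (auto simp flip: bops_add[OF E_bops])
  show "c *\<^sub>C x \<in> range E" if "x \<in> range E" for c x
    using that by (auto simp flip: bops_scaleC[OF E_bops])
qed

lemma sep_ED: "cinner_separating ED"
  unfolding cinner_separating_def
proof (intro ballI impI)
  fix a b assume a: "a \<in> ED" and b: "b \<in> ED" and h: "\<forall>\<xi>\<in>ED. cinner \<xi> a = cinner \<xi> b"
  show "a = b"
  proof (rule dense_cinner_eq[OF D_dense])
    fix \<eta> assume "\<eta> \<in> D"
    then have "cinner \<eta> (E a) = cinner \<eta> (E b)" using h by (simp flip: E_selfadj)
    then show "cinner a \<eta> = cinner b \<eta>" using a b by (auto simp: cinner_commute[of _ \<eta>])
  qed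
qed

lemma cinner_range_E_left: "y \<in> range E \<Longrightarrow> cinner y \<eta> = cinner y (E \<eta>)"
  by (metis E_idem E_selfadj rangeE)

lemma cinner_range_E_right: "b \<in> range E \<Longrightarrow> cinner z b = cinner (E z) b"
  by (metis E_idem E_selfadj rangeE)

lemma adj_E_commute:
  assumes X: "X \<in> ldag D" and XE: "\<And>\<xi>. \<xi> \<in> D \<Longrightarrow> E (X \<xi>) = X (E \<xi>)" and \<xi>: "\<xi> \<in> D"
  shows "E (adj D X \<xi>) = adj D X (E \<xi>)"
proof (rule dense_cinner_eq[OF D_dense])
  fix \<eta> assume \<eta>: "\<eta> \<in> D"
  have ED: "\<And>x. x \<in> D \<Longrightarrow> E x \<in> D" using ED_D by auto
  have "cinner (E (adj D X \<xi>)) \<eta> = cinner (adj D X \<xi>) (E \<eta>)" by (rule E_selfadj)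
  also have "\<dots> = cinner \<xi> (X (E \<eta>))" by (rule cinner_adj_left[OF sep_D X \<xi> ED[OF \<eta>]])
  also have "\<dots> = cinner (E \<xi>) (X \<eta>)" by (simp add: XE[OF \<eta>] E_selfadj)
  also have "\<dots> = cinner (adj D X (E \<xi>)) \<eta>" by (rule cinner_adj_left[OF sep_D X ED[OF \<xi>] \<eta>, symmetric])
  finally show "cinner (E (adj D X \<xi>)) \<eta> = cinner (adj D X (E \<xi>)) \<eta>" .
qed

lemma reduce_on_ED: "a \<in> ED \<Longrightarrow> reduce D E X a = X a"
  by (auto simp: reduce_def)

lemma reduce_ldag:
  assumes X: "X \<in> ldag D" and XE: "\<And>\<xi>. \<xi> \<in> D \<Longrightarrow> E (X \<xi>) = X (E \<xi>)"
  shows "reduce D E X \<in> ldag ED" and "\<And>b. b \<in> ED \<Longrightarrow> adj ED (reduce D E X) b = adj D X b"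
proof -
  have X_ED: "X a \<in> ED" if "a \<in> ED" for a
  proof -
    from that obtain \<xi> where "\<xi> \<in> D" "a = E \<xi>" by blast
    then have "X a = E (X \<xi>)" using XE by simp
    then show ?thesis using ldag_mem[OF X \<open>\<xi> \<in> D\<close>] by blast
  qed
  have adj_ED: "adj D X b \<in> ED" if "b \<in> ED" for b
  proof -
    from that obtain \<eta> where "\<eta> \<in> D" "b = E \<eta>" by blast
    then show ?thesis using adj_E_commute[OF X XE] adj_mem[OF sep_D X] by (metis image_eqI)
  qed
  have adj: "cinner (reduce D E X a) b = cinner a (adj D X b)" if "a \<in> ED" "b \<in> ED" for a b
    using that by (simp add: reduce_on_ED cinner_adj_right[OF sep_D X] ED_D)
  have "clinear_on ED (reduce D E X)"
    using csubspace_add[OF csubspace_ED] csubspace_scaleC[OF csubspace_ED]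
    by (simp add: clinear_on_def reduce_on_ED ldag_add[OF X] ldag_scaleC[OF X] ED_D)
  then show R: "reduce D E X \<in> ldag ED"
    by (rule ldagI[OF _ _ adj_ED adj]) (auto simp: reduce_on_ED X_ED reduce_def)
  show "adj ED (reduce D E X) b = adj D X b" if "b \<in> ED" for b
    using that adj by (intro adj_unique[OF sep_ED R] adj_ED) auto
qed

lemma M_E_commute: "X \<in> M \<Longrightarrow> \<xi> \<in> D \<Longrightarrow> E (X \<xi>) = X (E \<xi>)"
  by (rule Mc_commute[OF E_comm])

lemma Mr_reduce: "X \<in> M \<Longrightarrow> reduce D E X \<in> Mr"
  by (simp add: reduced_alg_eq_image)

lemma Mr_obtain: "W \<in> Mr \<Longrightarrow> \<exists>X\<in>M. W = reduce D E X"
  by (auto simp: reduced_alg_eq_image)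

lemma reduce_M_ldag: "X \<in> M \<Longrightarrow> reduce D E X \<in> ldag ED"
  and reduce_M_adj: "X \<in> M \<Longrightarrow> b \<in> ED \<Longrightarrow> adj ED (reduce D E X) b = adj D X b"
  by (intro reduce_ldag M_ldag M_E_commute; assumption)+

lemma M_ED: "X \<in> M \<Longrightarrow> a \<in> ED \<Longrightarrow> X a \<in> ED"
  by (metis ldag_mem reduce_M_ldag reduce_on_ED)

lemma adj_M_ED: "X \<in> M \<Longrightarrow> b \<in> ED \<Longrightarrow> adj D X b \<in> ED"
  by (metis adj_mem reduce_M_adj reduce_M_ldag sep_ED)

lemma bops_range_E_comp: assumes C: "C \<in> bops (range E)" shows "C \<circ> E \<in> bops UNIV"
proof -
  obtain c where c: "\<forall>x\<in>range E. norm (C x) \<le> c * norm x" using C by (auto simp: bops_def)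
  obtain e where e: "e \<ge> 0" "\<forall>x. norm (E x) \<le> e * norm x" using bops_bound[OF E_bops] by auto
  have lin: "clinear_on (range E) C" using C by (simp add: bops_def)
  have "norm (C (E x)) \<le> (max c 0 * e) * norm x" for x
  proof -
    have "norm (C (E x)) \<le> c * norm (E x)" using c by blast
    also have "\<dots> \<le> max c 0 * norm (E x)" by (intro mult_right_mono) auto
    also have "\<dots> \<le> max c 0 * (e * norm x)" using e by (intro mult_left_mono) auto
    finally show ?thesis by (simp add: mult.assoc)
  qed
  moreover have "clinear_on UNIV (C \<circ> E)"
    using lin by (simp add: clinear_on_def bops_add[OF E_bops] bops_scaleC[OF E_bops])
  ultimately show ?thesis unfolding bops_def by auto
qed

lemma bops_range_E_mem: assumes "C \<in> bops (range E)" shows "C x \<in> range E"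
proof (cases "x \<in> range E")
  case False
  then have "C x = E 0" using assms bops_zero[OF E_bops] by (simp add: bops_def)
  then show ?thesis by simp
qed (use assms in \<open>auto simp: bops_def\<close>)

lemma Cr_comp_E: assumes C: "C \<in> Cr" shows "C \<circ> E \<in> Mc"
proof -
  have CB: "C \<in> bops (range E)" by (rule wcomm_bops[OF C])
  have "cinner (C (E (X \<xi>))) \<eta> = cinner (C (E \<xi>)) (adj D X \<eta>)"
    if X: "X \<in> M" and \<xi>: "\<xi> \<in> D" and \<eta>: "\<eta> \<in> D" for X \<xi> \<eta>
  proof -
    have "E (X \<xi>) = reduce D E X (E \<xi>)" using M_E_commute[OF X \<xi>] \<xi> by (simp add: reduce_on_ED)
    then have "cinner (C (E (X \<xi>))) \<eta> = cinner (C (reduce D E X (E \<xi>))) (E \<eta>)"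
      using cinner_range_E_left[OF bops_range_E_mem[OF CB]] by simp
    also have "\<dots> = cinner (C (E \<xi>)) (adj ED (reduce D E X) (E \<eta>))"
      using C Mr_reduce[OF X] \<xi> \<eta> unfolding wcomm_def by blast
    also have "adj ED (reduce D E X) (E \<eta>) = E (adj D X \<eta>)"
      using \<eta> by (simp add: reduce_M_adj[OF X] adj_E_commute[OF M_ldag[OF X] M_E_commute[OF X]])
    finally show ?thesis using cinner_range_E_left[OF bops_range_E_mem[OF CB]] by simp
  qed
  then show ?thesis using bops_range_E_comp[OF CB] unfolding wcomm_def by auto
qed

lemma wbicomm_E_commute: "X \<in> wbicomm UNIV D M \<Longrightarrow> \<xi> \<in> D \<Longrightarrow> E (X \<xi>) = X (E \<xi>)"
  by (rule weak_commutation_imp_commute[OF D_dense wbicomm_ldag])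
    (auto intro: Mc_D[OF E_comm] wbicommD[OF _ E_comm])

lemma reduce_wbicomm: assumes X: "X \<in> wbicomm UNIV D M" shows "reduce D E X \<in> Br"
proof -
  note XL = wbicomm_ldag[OF X] and XE = wbicomm_E_commute[OF X]
  have "cinner (C (reduce D E X a)) b = cinner (C a) (adj ED (reduce D E X) b)"
    if C: "C \<in> Cr" and a: "a \<in> ED" and b: "b \<in> ED" for C a b
  proof -
    obtain x where x: "x \<in> D" "a = E x" using a by blast
    then have "X a = E (X x)" using XE by simp
    then have "C (reduce D E X a) = (C \<circ> E) (X a)" using a by (simp add: reduce_on_ED)
    then have "cinner (C (reduce D E X a)) b = cinner ((C \<circ> E) a) (adj D X b)"
      using wbicommD[OF X Cr_comp_E[OF C] ED_D[OF a] ED_D[OF b]] by simp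
    then show ?thesis using a b by (auto simp: reduce_ldag(2)[OF XL XE])
  qed
  then show ?thesis unfolding wbicomm_def using reduce_ldag(1)[OF XL XE] by blast
qed

definition compressE :: "('h \<Rightarrow> 'h) \<Rightarrow> 'h \<Rightarrow> 'h" where
  "compressE F = (\<lambda>x. if x \<in> range E then E (F x) else 0)"

lemma compressE_bops: assumes F: "F \<in> bops UNIV" shows "compressE F \<in> bops (range E)"
proof -
  obtain c where c: "\<forall>x. norm ((E \<circ> F) x) \<le> c * norm x"
    using bops_comp[OF E_bops F] by (auto simp: bops_def)
  have "clinear_on (range E) (compressE F)"
    unfolding clinear_on_def compressE_def
    using csubspace_add[OF csubspace_range_E] csubspace_scaleC[OF csubspace_range_E]
    by (simp add: bops_add[OF F] bops_add[OF E_bops] bops_scaleC[OF F] bops_scaleC[OF E_bops])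
  moreover have "compressE F ` range E \<subseteq> range E" by (auto simp: compressE_def)
  moreover have "\<exists>c. \<forall>x\<in>range E. norm (compressE F x) \<le> c * norm x"
    using c by (auto simp: compressE_def)
  moreover have "\<forall>x. x \<notin> range E \<longrightarrow> compressE F x = 0" by (simp add: compressE_def)
  ultimately show ?thesis unfolding bops_def by blast
qed

lemma cinner_compressE: "x \<in> range E \<Longrightarrow> b \<in> range E \<Longrightarrow> cinner (compressE F x) b = cinner (F x) b"
  by (simp add: compressE_def flip: cinner_range_E_right)

definition adjE :: "('h \<Rightarrow> 'h) \<Rightarrow> 'h \<Rightarrow> 'h" where
  "adjE C = compressE (cadj (C \<circ> E))"

lemma adjE_bops: "C \<in> bops (range E) \<Longrightarrow> adjE C \<in> bops (range E)"
  unfolding adjE_def by (intro compressE_bops cadj_bops bops_range_E_comp)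

lemma cinner_adjE:
  assumes C: "C \<in> bops (range E)" and "x \<in> range E" "b \<in> range E"
  shows "cinner (adjE C x) b = cinner x (C b)"
  using assms by (auto simp: adjE_def cinner_compressE cinner_cadj_left[OF bops_range_E_comp[OF C]])

lemma adjE_Cr: assumes C: "C \<in> Cr" shows "adjE C \<in> Cr"
proof -
  have CB: "C \<in> bops (range E)" by (rule wcomm_bops[OF C])
  have "cinner (adjE C (W a)) b = cinner (adjE C a) (adj ED W b)"
    if W: "W \<in> Mr" and a: "a \<in> ED" and b: "b \<in> ED" for W a b
  proof -
    obtain X where X: "X \<in> M" "W = reduce D E X" using Mr_obtain[OF W] by blast
    \<comment> \<open>the reduction of \<open>X\<^sup>\<dagger>\<close> is the adjoint of \<open>W\<close> in \<open>Mr\<close>\<close>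
    define W' where "W' = reduce D E (adj D X)"
    have W': "W' \<in> Mr" unfolding W'_def by (rule Mr_reduce[OF M_adj[OF X(1)]])
    have "adj ED W' a = X a"
      using a by (simp add: W'_def reduce_M_adj[OF M_adj[OF X(1)]] adj_adj[OF sep_D D_sub M_ldag[OF X(1)]] ED_D)
    then have swap: "cinner (C b) (X a) = cinner (C (W' b)) a"
      using C W' a b unfolding wcomm_def by auto
    have W'b: "W' b = adj ED W b"
      using X b by (simp add: W'_def reduce_on_ED reduce_M_adj)
    have "cinner (adjE C (W a)) b = cinner (X a) (C b)"
      using X a b M_ED[OF X(1) a] by (auto simp: reduce_on_ED cinner_adjE[OF CB])
    also have "\<dots> = cinner a (C (W' b))"
      by (metis swap cinner_commute)
    also have "\<dots> = cinner (adjE C a) (W' b)"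
      using a b W'b adj_mem[OF sep_ED reduce_M_ldag[OF X(1)] b] X
      by (auto simp: cinner_adjE[OF CB])
    finally show ?thesis by (simp only: W'b)
  qed
  then show ?thesis using adjE_bops[OF CB] unfolding wcomm_def by blast
qed

lemma Br_adj: assumes Y: "Y \<in> Br" shows "adj ED Y \<in> Br"
proof -
  note YL = wbicomm_ldag[OF Y]
  have "cinner (C (adj ED Y a)) b = cinner (C a) (adj ED (adj ED Y) b)"
    if C: "C \<in> Cr" and a: "a \<in> ED" and b: "b \<in> ED" for C a b
  proof -
    have CB: "C \<in> bops (range E)" by (rule wcomm_bops[OF C])
    have "cinner (adjE C (Y b)) a = cinner (adjE C b) (adj ED Y a)"
      by (rule wbicommD[OF Y adjE_Cr[OF C] b a])
    then have "cinner (Y b) (C a) = cinner b (C (adj ED Y a))"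
      using a b ldag_mem[OF YL b] adj_mem[OF sep_ED YL a] by (auto simp: cinner_adjE[OF CB])
    then have "cinner (C (adj ED Y a)) b = cinner (C a) (Y b)"
      by (metis cinner_commute)
    then show ?thesis using adj_adj[OF sep_ED csubspace_ED YL b] by simp
  qed
  then show ?thesis using adj_ldag[OF sep_ED csubspace_ED YL] unfolding wbicomm_def by blast
qed

lemmas Br_comp = wbicomm_comp[OF sep_ED]

lemma Br_plus: "Y1 \<in> Br \<Longrightarrow> Y2 \<in> Br \<Longrightarrow> (\<lambda>x. Y1 x + Y2 x) \<in> Br"
  by (rule wbicomm_plus[OF sep_ED csubspace_ED]) auto

lemma compressE_Cr:
  assumes C: "C \<in> Mc" and C': "C' \<in> Mc" shows "compressE (cadj C' \<circ> C) \<in> Cr"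
proof -
  have C'B: "C' \<in> bops UNIV" by (rule Mc_bops[OF C'])
  have FB: "cadj C' \<circ> C \<in> bops UNIV" by (intro bops_comp cadj_bops C'B Mc_bops[OF C])
  have rel: "cinner (compressE (cadj C' \<circ> C) x) b = cinner (C x) (C' b)"
    if "x \<in> range E" "b \<in> range E" for x b
    using that by (simp add: cinner_compressE cinner_cadj_left[OF C'B])
  have "cinner (compressE (cadj C' \<circ> C) (W a)) b = cinner (compressE (cadj C' \<circ> C) a) (adj ED W b)"
    if W: "W \<in> Mr" and a: "a \<in> ED" and b: "b \<in> ED" for W a b
  proof -
    obtain X where X: "X \<in> M" "W = reduce D E X" using Mr_obtain[OF W] by blast
    have adjW: "adj ED W b = adj D X b" using X b by (simp add: reduce_M_adj)
    have "cinner (compressE (cadj C' \<circ> C) (W a)) b = cinner (C (X a)) (C' b)"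
      using rel M_ED[OF X(1) a] a b X by (auto simp: reduce_on_ED)
    also have "\<dots> = cinner (C a) (adj D X (C' b))"
      by (rule Mc_weak_comm[OF C X(1) ED_D[OF a] Mc_D[OF C' ED_D[OF b]]])
    also have "adj D X (C' b) = C' (adj D X b)"
      using Mc_commute[OF C' M_adj[OF X(1)] ED_D[OF b]] by simp
    also have "cinner (C a) (C' (adj D X b)) = cinner (compressE (cadj C' \<circ> C) a) (adj D X b)"
      using rel a adj_M_ED[OF X(1) b] by auto
    finally show ?thesis unfolding adjW .
  qed
  then show ?thesis using compressE_bops[OF FB] unfolding wcomm_def by blast
qed

text \<open>Elements of \<open>Br\<close> commute with the compression of \<open>C'\<^sup>* C\<close> to the range of \<open>E\<close>, which lies in \<open>Cr\<close>.\<close>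
lemma cinner_Mc_Br:
  assumes Y: "Y \<in> Br" and C: "C \<in> Mc" and C': "C' \<in> Mc" and a: "a \<in> ED" and b: "b \<in> ED"
  shows "cinner (C (Y a)) (C' b) = cinner (C a) (C' (adj ED Y b))"
proof -
  note YL = wbicomm_ldag[OF Y]
  have rel: "cinner (compressE (cadj C' \<circ> C) x) y = cinner (C x) (C' y)"
    if "x \<in> range E" "y \<in> range E" for x y
    using that by (simp add: cinner_compressE cinner_cadj_left[OF Mc_bops[OF C']])
  have "cinner (C (Y a)) (C' b) = cinner (compressE (cadj C' \<circ> C) (Y a)) b"
    using rel ldag_mem[OF YL a] b by auto
  also have "\<dots> = cinner (compressE (cadj C' \<circ> C) a) (adj ED Y b)"
    by (rule wbicommD[OF Y compressE_Cr[OF C C'] a b])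
  also have "\<dots> = cinner (C a) (C' (adj ED Y b))"
    using rel a adj_mem[OF sep_ED YL b] by auto
  finally show ?thesis .
qed
end

section \<open>The extension to the central support\<close>

text \<open>A point \<open>\<Sum>\<^sub>k C\<^sub>k E \<xi>\<^sub>k + (I - Z) \<eta>\<close> of the extended domain, with its defining data.\<close>
record 'h ext_term =
  nterms :: nat
  ops :: "nat \<Rightarrow> 'h \<Rightarrow> 'h"
  vecs :: "nat \<Rightarrow> 'h"
  rest :: 'h

locale reduction_support = reduction D M E for D :: "'h::chilbert_space set" and M E +
  fixes Z :: "'h \<Rightarrow> 'h"
  assumes Z_proj: "is_proj UNIV Z"
    and Z_range: "range Z = closure (cspan (\<Union>C\<in>wcomm UNIV D M. range (C \<circ> E)))"
begin

definition admissible :: "'h ext_term \<Rightarrow> bool" where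
  "admissible r \<longleftrightarrow> (\<forall>k<nterms r. ops r k \<in> Mc \<and> vecs r k \<in> D) \<and> rest r \<in> D"

definition ext_point :: "'h ext_term \<Rightarrow> 'h" where
  "ext_point r = (\<Sum>k<nterms r. ops r k (E (vecs r k))) + (rest r - Z (rest r))"

definition ext_value :: "('h \<Rightarrow> 'h) \<Rightarrow> 'h ext_term \<Rightarrow> 'h" where
  "ext_value Y r = (\<Sum>k<nterms r. ops r k (Y (E (vecs r k))))"

lemma admissibleD:
  "admissible r \<Longrightarrow> k < nterms r \<Longrightarrow> ops r k \<in> Mc"
  "admissible r \<Longrightarrow> k < nterms r \<Longrightarrow> vecs r k \<in> D"
  "admissible r \<Longrightarrow> rest r \<in> D"
  by (simp_all add: admissible_def)

lemma ext_graph_iff: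
  "(a, b) \<in> ext_graph D Mc E Z Y \<longleftrightarrow> (\<exists>r. admissible r \<and> a = ext_point r \<and> b = ext_value Y r)"
proof
  assume "(a, b) \<in> ext_graph D Mc E Z Y"
  then have "\<exists>n (C :: nat \<Rightarrow> 'h \<Rightarrow> 'h) \<xi> \<eta>. (\<forall>k<n. C k \<in> Mc \<and> \<xi> k \<in> D) \<and> \<eta> \<in> D
      \<and> a = (\<Sum>k<n. C k (E (\<xi> k))) + (\<eta> - Z \<eta>) \<and> b = (\<Sum>k<n. C k (Y (E (\<xi> k))))"
    unfolding ext_graph_def by simp
  then obtain n :: nat and C :: "nat \<Rightarrow> 'h \<Rightarrow> 'h" and \<xi> \<eta> where "\<forall>k<n. C k \<in> Mc \<and> \<xi> k \<in> D" "\<eta> \<in> D"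
      "a = (\<Sum>k<n. C k (E (\<xi> k))) + (\<eta> - Z \<eta>)" "b = (\<Sum>k<n. C k (Y (E (\<xi> k))))"
    by blast
  then show "\<exists>r. admissible r \<and> a = ext_point r \<and> b = ext_value Y r"
    by (intro exI[of _ "\<lparr>nterms = n, ops = C, vecs = \<xi>, rest = \<eta>\<rparr>"])
      (simp add: admissible_def ext_point_def ext_value_def)
next
  assume "\<exists>r. admissible r \<and> a = ext_point r \<and> b = ext_value Y r"
  then show "(a, b) \<in> ext_graph D Mc E Z Y"
    unfolding ext_graph_def admissible_def ext_point_def ext_value_def by blast
qed

lemma Z_bops: "Z \<in> bops UNIV"
  and Z_idem [simp]: "Z (Z x) = Z x"
  and Z_selfadj: "cinner (Z x) y = cinner x (Z y)"
  using Z_proj by (simp_all add: is_proj_def)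

lemma range_Z_iff: "z \<in> range Z \<longleftrightarrow> Z z = z"
  by (metis Z_idem rangeE rangeI)

lemma csubspace_range_Z: "csubspace (range Z)"
  by (simp add: csubspace_def range_Z_iff bops_zero[OF Z_bops] bops_add[OF Z_bops] bops_scaleC[OF Z_bops])

lemma range_Z_sum: "(\<And>k. k < (n::nat) \<Longrightarrow> f k \<in> range Z) \<Longrightarrow> (\<Sum>k<n. f k) \<in> range Z"
  by (induction n) (auto intro: csubspace_zero[OF csubspace_range_Z] csubspace_add[OF csubspace_range_Z])

lemma Mc_E_range_Z: assumes C: "C \<in> Mc" shows "C (E x) \<in> range Z"
proof -
  have "C (E x) \<in> cspan (\<Union>C\<in>Mc. range (C \<circ> E))"
    unfolding cspan_def using C
    by (intro CollectI exI[of _ 1] exI[of _ "\<lambda>_. 1"] exI[of _ "\<lambda>_. C (E x)"]) (auto simp: scaleC_one)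
  then show ?thesis using Z_range closure_subset by blast
qed

lemma cinner_Z_complement: "z \<in> range Z \<Longrightarrow> cinner (\<eta> - Z \<eta>) z = 0"
  by (metis Z_idem Z_selfadj bops_diff[OF Z_bops] cinner_zero_left diff_self range_Z_iff)

lemma cinner_Z_complement': "z \<in> range Z \<Longrightarrow> cinner z (\<eta> - Z \<eta>) = 0"
  by (metis cinner_Z_complement cinner_commute complex_cnj_zero)

lemma Mc_ldag_range_Z: "C \<in> Mc \<Longrightarrow> Y \<in> ldag ED \<Longrightarrow> \<xi> \<in> D \<Longrightarrow> C (Y (E \<xi>)) \<in> range Z"
  by (metis Mc_E_range_Z E_idem imageE image_eqI ldag_mem)

lemma ext_value_range_Z: "admissible r \<Longrightarrow> Y \<in> ldag ED \<Longrightarrow> ext_value Y r \<in> range Z"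
  unfolding ext_value_def by (intro range_Z_sum Mc_ldag_range_Z) (auto simp: admissibleD)

lemma cadj_ext_value_range_Z:
  assumes C: "C \<in> Mc" and r: "admissible r" and Y: "Y \<in> ldag ED"
  shows "cadj C (ext_value Y r) \<in> range Z"
proof -
  have "cadj C (ext_value Y r) = (\<Sum>k<nterms r. (cadj C \<circ> ops r k) (Y (E (vecs r k))))"
    unfolding ext_value_def by (simp add: bops_sum[OF cadj_bops[OF Mc_bops[OF C]]])
  also have "\<dots> \<in> range Z"
    using r Y by (intro range_Z_sum Mc_ldag_range_Z Mc_comp Mc_cadj C) (auto simp: admissibleD)
  finally show ?thesis .
qed

text \<open>\<open>Y\<^sub>e\<close> and \<open>(Y\<^sup>\<dagger>)\<^sub>e\<close> are formally adjoint on the extended domain; the \<open>(I - Z)\<close>-parts drop out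
  because all values lie in the range of \<open>Z\<close>.\<close>
lemma cinner_ext_value_point:
  assumes Y: "Y \<in> Br" and r: "admissible r" and s: "admissible s"
  shows "cinner (ext_value Y r) (ext_point s) = cinner (ext_point r) (ext_value (adj ED Y) s)"
proof -
  note YL = wbicomm_ldag[OF Y]
  note YdL = adj_ldag[OF sep_ED csubspace_ED YL]
  define f where "f k = ops r k (E (vecs r k))" for k
  define h where "h j = ops s j (adj ED Y (E (vecs s j)))" for j
  have "cinner (ext_value Y r) (ext_point s) = (\<Sum>j<nterms s. cinner (ext_value Y r) (ops s j (E (vecs s j))))"
    by (simp add: ext_point_def cinner_add_right cinner_sum_right
        cinner_Z_complement'[OF ext_value_range_Z[OF r YL]])
  also have "\<dots> = (\<Sum>j<nterms s. \<Sum>k<nterms r. cinner (f k) (h j))"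
    unfolding ext_value_def f_def h_def cinner_sum_left
    by (intro sum.cong refl cinner_Mc_Br[OF Y] image_eqI) (auto simp: admissibleD[OF r] admissibleD[OF s])
  also have "\<dots> = (\<Sum>j<nterms s. cinner (ext_point r) (h j))"
    unfolding ext_point_def f_def
    by (intro sum.cong refl)
      (simp add: cinner_add_left cinner_sum_left h_def cinner_Z_complement Mc_ldag_range_Z YdL
        admissibleD[OF s])
  also have "\<dots> = cinner (ext_point r) (ext_value (adj ED Y) s)"
    by (simp add: ext_value_def h_def cinner_sum_right)
  finally show ?thesis .
qed

definition ext_shift :: "('h \<Rightarrow> 'h) \<Rightarrow> 'h ext_term \<Rightarrow> 'h ext_term" where
  "ext_shift Y s = s\<lparr>vecs := (\<lambda>k. Y (E (vecs s k))), rest := 0\<rparr>"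

lemma ldag_ED_E: "Y \<in> ldag ED \<Longrightarrow> \<xi> \<in> D \<Longrightarrow> E (Y (E \<xi>)) = Y (E \<xi>)"
  by (metis E_idem imageE image_eqI ldag_mem)

lemma ext_shift:
  assumes s: "admissible s" and Y: "Y \<in> ldag ED"
  shows "admissible (ext_shift Y s)"
    and "ext_point (ext_shift Y s) = ext_value Y s"
    and "ext_value Y' (ext_shift Y s) = ext_value (Y' \<circ> Y) s"
  using s ldag_mem[OF Y] ED_D csubspace_zero[OF D_sub]
  by (auto simp: admissible_def ext_shift_def ext_point_def ext_value_def bops_zero[OF Z_bops]
      ldag_ED_E[OF Y])

lemma cinner_ext_value_value:
  assumes Y: "Y \<in> Br" and r: "admissible r" and s: "admissible s"
  shows "cinner (ext_value Y r) (ext_value Y s) = cinner (ext_point r) (ext_value (adj ED Y \<circ> Y) s)"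
  using cinner_ext_value_point[OF Y r ext_shift(1)[OF s wbicomm_ldag[OF Y]]]
  by (simp add: ext_shift[OF s wbicomm_ldag[OF Y]])

lemma ext_value_plus:
  "admissible r \<Longrightarrow> ext_value (\<lambda>x. Y1 x + Y2 x) r = ext_value Y1 r + ext_value Y2 r"
  by (simp add: ext_value_def bops_add[OF Mc_bops] admissibleD sum.distrib)

text \<open>\<open>\<parallel>Y\<^sub>1 x\<parallel>\<^sup>2 + \<parallel>Y\<^sub>2 x\<parallel>\<^sup>2 = \<langle>x, A x\<rangle>\<close> for \<open>A = Y\<^sub>1\<^sup>\<dagger>Y\<^sub>1 + Y\<^sub>2\<^sup>\<dagger>Y\<^sub>2\<close>, so along a sequence of points
  on which the extension of \<open>A\<close> converges, the values of \<open>Y\<^sub>1\<close> and \<open>Y\<^sub>2\<close> form Cauchy sequences.\<close>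
lemma norm_ext_value_diff_bound:
  fixes Y1 Y2 defines "A \<equiv> \<lambda>x. (adj ED Y1 \<circ> Y1) x + (adj ED Y2 \<circ> Y2) x"
  assumes Y1: "Y1 \<in> Br" and Y2: "Y2 \<in> Br" and r: "admissible r" and s: "admissible s"
  shows "(norm (ext_value Y1 r - ext_value Y1 s))\<^sup>2 + (norm (ext_value Y2 r - ext_value Y2 s))\<^sup>2
    \<le> norm (ext_point r - ext_point s) * norm (ext_value A r - ext_value A s)"
proof -
  have gram: "cinner (ext_point p) (ext_value A q) =
      cinner (ext_value Y1 p) (ext_value Y1 q) + cinner (ext_value Y2 p) (ext_value Y2 q)"
    if "admissible p" "admissible q" for p q
    using cinner_ext_value_value[OF Y1 that] cinner_ext_value_value[OF Y2 that]
    by (simp add: A_def ext_value_plus[OF that(2)] cinner_add_right comp_def)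
  let ?d1 = "ext_value Y1 r - ext_value Y1 s" and ?d2 = "ext_value Y2 r - ext_value Y2 s"
  have "cinner (ext_point r - ext_point s) (ext_value A r - ext_value A s) =
        cinner ?d1 ?d1 + cinner ?d2 ?d2"
    by (simp add: cinner_diff_left cinner_diff_right gram r s algebra_simps)
  then have "Re (cinner (ext_point r - ext_point s) (ext_value A r - ext_value A s)) =
      (norm ?d1)\<^sup>2 + (norm ?d2)\<^sup>2"
    by (simp add: Re_cinner_self)
  moreover have "Re (cinner (ext_point r - ext_point s) (ext_value A r - ext_value A s))
      \<le> norm (ext_point r - ext_point s) * norm (ext_value A r - ext_value A s)"
    using complex_Re_le_cmod norm_cinner_le order_trans by blast
  ultimately show ?thesis by simp
qed

lemma cinner_Mc_ext_value:
  assumes Y: "Y \<in> Br" and C: "C \<in> Mc" and r: "admissible r" and s: "admissible s"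
  shows "cinner (C (ext_value Y r)) (ext_point s) = cinner (C (ext_point r)) (ext_value (adj ED Y) s)"
proof -
  have CB: "C \<in> bops UNIV" by (rule Mc_bops[OF C])
  note YdL = adj_ldag[OF sep_ED csubspace_ED wbicomm_ldag[OF Y]]
  \<comment> \<open>\<open>C\<close> can be absorbed into the coefficients of \<open>r\<close>, except on the \<open>(I - Z)\<close>-part,
    which stays orthogonal to the values because \<open>C\<^sup>*\<close> preserves the range of \<open>Z\<close> on them\<close>
  define r' where "r' = r\<lparr>ops := (\<lambda>k. C \<circ> ops r k)\<rparr>"
  have r': "admissible r'" using r by (simp add: r'_def admissible_def Mc_comp[OF C])
  define P where "P = (\<Sum>k<nterms r. C (ops r k (E (vecs r k))))"
  define w where "w = rest r - Z (rest r)"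
  let ?v = "ext_value (adj ED Y) s"
  have "cinner (C (ext_value Y r)) (ext_point s) = cinner (ext_point r') ?v"
    using cinner_ext_value_point[OF Y r' s] by (simp add: r'_def ext_value_def bops_sum[OF CB])
  also have "\<dots> = cinner P ?v"
    using cinner_Z_complement[OF ext_value_range_Z[OF s YdL]]
    by (simp add: r'_def ext_point_def P_def cinner_add_left)
  also have "\<dots> = cinner (C (ext_point r)) ?v"
    using cinner_Z_complement[OF cadj_ext_value_range_Z[OF C s YdL], of "rest r"]
    by (simp add: ext_point_def P_def bops_add[OF CB] bops_sum[OF CB] cinner_add_left
        cinner_cadj_right[OF CB])
  finally show ?thesis .
qed

definition single_term :: "('h \<Rightarrow> 'h) \<Rightarrow> 'h \<Rightarrow> 'h ext_term" where
  "single_term C u = \<lparr>nterms = 1, ops = (\<lambda>_. C), vecs = (\<lambda>_. u), rest = 0\<rparr>"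

lemma single_term:
  "C \<in> Mc \<Longrightarrow> u \<in> D \<Longrightarrow> admissible (single_term C u)"
  "ext_point (single_term C u) = C (E u)"
  "ext_value Y (single_term C u) = C (Y (E u))"
  by (simp_all add: single_term_def admissible_def ext_point_def ext_value_def
      csubspace_zero[OF D_sub] bops_zero[OF Z_bops])

lemma range_Z_eq_zero:
  assumes d: "d \<in> range Z" and orth: "\<And>C u. C \<in> Mc \<Longrightarrow> u \<in> D \<Longrightarrow> cinner d (C (E u)) = 0"
  shows "d = 0"
proof -
  have orth_all: "cinner d (C (E x)) = 0" if C: "C \<in> Mc" for C x
  proof -
    have "x \<in> closure D" using D_dense by simp
    then obtain u where u: "\<And>n. u n \<in> D" "u \<longlonglongrightarrow> x"
      using closure_sequential by blast
    have "(\<lambda>n. C (E (u n))) \<longlonglongrightarrow> C (E x)"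
      by (intro bops_tendsto[OF Mc_bops[OF C]] bops_tendsto[OF E_bops] u)
    then show ?thesis by (rule cinner_tendsto_zero[rotated]) (rule orth[OF C u(1)])
  qed
  have orth_span: "cinner d y = 0" if y: "y \<in> cspan (\<Union>C\<in>Mc. range (C \<circ> E))" for y
  proof -
    obtain n a v where v: "\<forall>k<(n::nat). v k \<in> (\<Union>C\<in>Mc. range (C \<circ> E))" and yv: "y = (\<Sum>k<n. a k *\<^sub>C v k)"
      using y unfolding cspan_def by blast
    have "cinner d y = (\<Sum>k<n. cnj (a k) * cinner d (v k))"
      by (simp add: yv cinner_sum_right cinner_scaleC_right)
    also have "\<dots> = 0"
    proof (rule sum.neutral, rule ballI)
      fix k assume "k \<in> {..<n}"
      then obtain C x where "C \<in> Mc" "v k = C (E x)" using v by auto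
      then show "cnj (a k) * cinner d (v k) = 0" using orth_all by simp
    qed
    finally show ?thesis .
  qed
  have "cinner d y = 0" if y: "y \<in> range Z" for y
  proof -
    have "y \<in> closure (cspan (\<Union>C\<in>Mc. range (C \<circ> E)))" using y Z_range by simp
    then obtain f where f: "\<And>n. f n \<in> cspan (\<Union>C\<in>Mc. range (C \<circ> E))" "f \<longlonglongrightarrow> y"
      using closure_sequential by blast
    show ?thesis by (rule cinner_tendsto_zero[OF orth_span[OF f(1)] f(2)])
  qed
  from this[OF d] show ?thesis by (simp add: cinner_self_eq_zero)
qed

text \<open>\<open>ext_limit Y \<xi> w\<close> says that \<open>w\<close> is the value at \<open>\<xi>\<close> of the closure of the extension of \<open>Y\<close>,
  recognised through its inner products with the total set \<open>Mc E D\<close> of the range of \<open>Z\<close>.\<close>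
definition ext_limit :: "('h \<Rightarrow> 'h) \<Rightarrow> 'h \<Rightarrow> 'h \<Rightarrow> bool" where
  "ext_limit Y \<xi> w \<longleftrightarrow> w \<in> range Z \<and>
     (\<forall>C\<in>Mc. \<forall>u\<in>D. cinner w (C (E u)) = cinner \<xi> (C (adj ED Y (E u))))"

lemma ext_limitI:
  assumes Y: "Y \<in> Br" and r: "\<And>n. admissible (r n)" and z: "(\<lambda>n. ext_point (r n)) \<longlonglongrightarrow> \<xi>"
    and v: "(\<lambda>n. ext_value Y (r n)) \<longlonglongrightarrow> w"
  shows "ext_limit Y \<xi> w"
proof -
  have "w \<in> range Z"
    using closed_sequentially[of "range Z"] Z_range ext_value_range_Z[OF r wbicomm_ldag[OF Y]] v
    by (metis closed_closure)
  moreover have "cinner w (C (E u)) = cinner \<xi> (C (adj ED Y (E u)))" if "C \<in> Mc" "u \<in> D" for C u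
  proof -
    have "(\<lambda>n. cinner (ext_value Y (r n)) (C (E u))) \<longlonglongrightarrow> cinner w (C (E u))"
      by (intro tendsto_cinner v tendsto_const)
    moreover have "(\<lambda>n. cinner (ext_value Y (r n)) (C (E u))) \<longlonglongrightarrow> cinner \<xi> (C (adj ED Y (E u)))"
      using cinner_ext_value_point[OF Y r single_term(1)[OF that]]
      by (simp add: single_term) (intro tendsto_cinner z tendsto_const)
    ultimately show ?thesis by (rule LIMSEQ_unique)
  qed
  ultimately show ?thesis by (simp add: ext_limit_def)
qed

lemma ext_limit_unique: "ext_limit Y \<xi> w1 \<Longrightarrow> ext_limit Y \<xi> w2 \<Longrightarrow> w1 = w2"
  using range_Z_eq_zero[of "w1 - w2"] csubspace_diff[OF csubspace_range_Z]
  by (simp add: ext_limit_def cinner_diff_left)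

end

section \<open>The closure of the extension\<close>

locale reduction_domain = reduction_support D M E Z for D :: "'h::chilbert_space set" and M E Z +
  assumes dom_hyp: "(\<Inter>X\<in>wbicomm (range E) (E ` D) (reduced_alg D E M).
                     closure_dom (ext_graph D (wcomm UNIV D M) E Z X)) = D"
begin

lemma ext_approx:
  assumes Y1: "Y1 \<in> Br" and Y2: "Y2 \<in> Br" and \<xi>: "\<xi> \<in> D"
  shows "\<exists>r. (\<forall>n. admissible (r n)) \<and> (\<lambda>n. ext_point (r n)) \<longlonglongrightarrow> \<xi> \<and>
             convergent (\<lambda>n. ext_value Y1 (r n)) \<and> convergent (\<lambda>n. ext_value Y2 (r n))"
proof -
  let ?A = "\<lambda>x. (adj ED Y1 \<circ> Y1) x + (adj ED Y2 \<circ> Y2) x"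
  have "?A \<in> Br" by (intro Br_plus Br_comp Br_adj Y1 Y2)
  then have "\<xi> \<in> closure_dom (ext_graph D Mc E Z ?A)" using dom_hyp \<xi> by blast
  then obtain f g where fg: "\<And>n. (f n, g n) \<in> ext_graph D Mc E Z ?A" "f \<longlonglongrightarrow> \<xi>" "convergent g"
    unfolding closure_dom_def by blast
  have "\<forall>n. \<exists>r. admissible r \<and> f n = ext_point r \<and> g n = ext_value ?A r"
    using fg(1) ext_graph_iff by blast
  then obtain r where r: "\<And>n. admissible (r n)" "\<And>n. f n = ext_point (r n)" "\<And>n. g n = ext_value ?A (r n)"
    by metis
  define z where "z n = ext_point (r n)" for n
  define v where "v n = ext_value ?A (r n)" for n
  have "f = z" "g = v" by (simp_all add: fun_eq_iff z_def v_def r(2,3))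
  then have z: "z \<longlonglongrightarrow> \<xi>" and v: "convergent v" using fg(2,3) by simp_all
  have bound: "(norm (ext_value Y1 (r n) - ext_value Y1 (r m)))\<^sup>2 + (norm (ext_value Y2 (r n) - ext_value Y2 (r m)))\<^sup>2
      \<le> norm (z n - z m) * norm (v n - v m)" for n m
    unfolding z_def v_def by (rule norm_ext_value_diff_bound[OF Y1 Y2 r(1) r(1)])
  have "Cauchy (\<lambda>n. ext_value Y1 (r n))" "Cauchy (\<lambda>n. ext_value Y2 (r n))"
    by (rule Cauchy_if_square_bounded[OF LIMSEQ_imp_Cauchy[OF z] convergent_imp_Bseq[OF v]],
        use bound zero_le_power2 in \<open>smt (verit)\<close>)+
  then show ?thesis using r(1) z unfolding z_def[abs_def] by (auto simp: Cauchy_convergent_iff)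
qed

lemma ext_limit_exists: "Y \<in> Br \<Longrightarrow> \<xi> \<in> D \<Longrightarrow> \<exists>w. ext_limit Y \<xi> w"
  by (metis convergent_def ext_approx ext_limitI)

definition ext_closure :: "('h \<Rightarrow> 'h) \<Rightarrow> 'h \<Rightarrow> 'h" where
  "ext_closure Y = (\<lambda>x. if x \<in> D then (THE w. ext_limit Y x w) else 0)"

lemma ext_limit_ext_closure:
  assumes Y: "Y \<in> Br" and \<xi>: "\<xi> \<in> D" shows "ext_limit Y \<xi> (ext_closure Y \<xi>)"
proof -
  obtain w where w: "ext_limit Y \<xi> w" using ext_limit_exists[OF Y \<xi>] by blast
  have "(THE w. ext_limit Y \<xi> w) = w" by (rule the_equality) (use w ext_limit_unique in blast)+
  then show ?thesis using w \<xi> by (simp add: ext_closure_def)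
qed

lemma ext_closure_eqI: "Y \<in> Br \<Longrightarrow> \<xi> \<in> D \<Longrightarrow> ext_limit Y \<xi> w \<Longrightarrow> ext_closure Y \<xi> = w"
  using ext_limit_ext_closure ext_limit_unique by blast

lemma ext_closure_tendsto:
  assumes Y1: "Y1 \<in> Br" and Y2: "Y2 \<in> Br" and \<xi>: "\<xi> \<in> D"
  obtains r where "\<And>n. admissible (r n)" "(\<lambda>n. ext_point (r n)) \<longlonglongrightarrow> \<xi>"
    "(\<lambda>n. ext_value Y1 (r n)) \<longlonglongrightarrow> ext_closure Y1 \<xi>" "convergent (\<lambda>n. ext_value Y2 (r n))"
proof -
  obtain r where r: "\<And>n. admissible (r n)" "(\<lambda>n. ext_point (r n)) \<longlonglongrightarrow> \<xi>"
      "convergent (\<lambda>n. ext_value Y1 (r n))" "convergent (\<lambda>n. ext_value Y2 (r n))"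
    using ext_approx[OF Y1 Y2 \<xi>] by blast
  obtain w where w: "(\<lambda>n. ext_value Y1 (r n)) \<longlonglongrightarrow> w" using r(3) by (auto simp: convergent_def)
  have "ext_closure Y1 \<xi> = w" by (rule ext_closure_eqI[OF Y1 \<xi> ext_limitI[OF Y1 r(1) r(2) w]])
  then show ?thesis using that r w by blast
qed

text \<open>The values of \<open>Y\<^sub>e\<close> along an approximating sequence are themselves points of the extended
  domain, along which every \<open>Y'\<^sub>e\<close> converges.\<close>
lemma ext_closure_mem_D: assumes Y: "Y \<in> Br" and \<xi>: "\<xi> \<in> D" shows "ext_closure Y \<xi> \<in> D"
proof -
  have "ext_closure Y \<xi> \<in> closure_dom (ext_graph D Mc E Z Y')" if Y': "Y' \<in> Br" for Y'
  proof -
    note YL = wbicomm_ldag[OF Y]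
    obtain r where r: "\<And>n. admissible (r n)" "(\<lambda>n. ext_point (r n)) \<longlonglongrightarrow> \<xi>"
        "(\<lambda>n. ext_value Y (r n)) \<longlonglongrightarrow> ext_closure Y \<xi>" "convergent (\<lambda>n. ext_value (Y' \<circ> Y) (r n))"
      using ext_closure_tendsto[OF Y Br_comp[OF Y' Y] \<xi>] by blast
    have "(ext_point (ext_shift Y (r n)), ext_value Y' (ext_shift Y (r n))) \<in> ext_graph D Mc E Z Y'" for n
      using ext_shift(1)[OF r(1) YL] ext_graph_iff by blast
    then have "\<forall>n. (ext_value Y (r n), ext_value (Y' \<circ> Y) (r n)) \<in> ext_graph D Mc E Z Y'"
      by (simp add: ext_shift[OF r(1) YL])
    with r(3,4) show ?thesis
      unfolding closure_dom_def
      by (intro CollectI exI[of _ "\<lambda>n. ext_value Y (r n)"] exI[of _ "\<lambda>n. ext_value (Y' \<circ> Y) (r n)"]) blast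
  qed
  then show ?thesis using dom_hyp by blast
qed

lemma ext_closure_add:
  "Y \<in> Br \<Longrightarrow> a \<in> D \<Longrightarrow> b \<in> D \<Longrightarrow> ext_closure Y (a + b) = ext_closure Y a + ext_closure Y b"
  using ext_limit_ext_closure[of Y a] ext_limit_ext_closure[of Y b]
  by (intro ext_closure_eqI csubspace_add[OF D_sub])
    (auto simp: ext_limit_def cinner_add_left csubspace_add[OF csubspace_range_Z])

lemma ext_closure_scaleC:
  "Y \<in> Br \<Longrightarrow> a \<in> D \<Longrightarrow> ext_closure Y (c *\<^sub>C a) = c *\<^sub>C ext_closure Y a"
  using ext_limit_ext_closure[of Y a]
  by (intro ext_closure_eqI csubspace_scaleC[OF D_sub])
    (auto simp: ext_limit_def cinner_scaleC_left csubspace_scaleC[OF csubspace_range_Z])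

lemma cinner_Mc_ext_closure:
  assumes Y: "Y \<in> Br" and C: "C \<in> Mc" and \<xi>: "\<xi> \<in> D" and \<eta>: "\<eta> \<in> D"
  shows "cinner (C (ext_closure Y \<xi>)) \<eta> = cinner (C \<xi>) (ext_closure (adj ED Y) \<eta>)"
proof -
  have CB: "C \<in> bops UNIV" by (rule Mc_bops[OF C])
  have Yd: "adj ED Y \<in> Br" by (rule Br_adj[OF Y])
  obtain r where r: "\<And>n. admissible (r n)" "(\<lambda>n. ext_point (r n)) \<longlonglongrightarrow> \<xi>"
      "(\<lambda>n. ext_value Y (r n)) \<longlonglongrightarrow> ext_closure Y \<xi>"
    using ext_closure_tendsto[OF Y Y \<xi>] by blast
  obtain s where s: "\<And>n. admissible (s n)" "(\<lambda>n. ext_point (s n)) \<longlonglongrightarrow> \<eta>"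
      "(\<lambda>n. ext_value (adj ED Y) (s n)) \<longlonglongrightarrow> ext_closure (adj ED Y) \<eta>"
    using ext_closure_tendsto[OF Yd Yd \<eta>] by blast
  have step: "cinner (C (ext_closure Y \<xi>)) (ext_point (s m)) = cinner (C \<xi>) (ext_value (adj ED Y) (s m))" for m
  proof -
    have "(\<lambda>n. cinner (C (ext_value Y (r n))) (ext_point (s m))) \<longlonglongrightarrow> cinner (C (ext_closure Y \<xi>)) (ext_point (s m))"
      by (intro tendsto_cinner bops_tendsto[OF CB] r(3) tendsto_const)
    moreover have "(\<lambda>n. cinner (C (ext_value Y (r n))) (ext_point (s m))) \<longlonglongrightarrow> cinner (C \<xi>) (ext_value (adj ED Y) (s m))"
      unfolding cinner_Mc_ext_value[OF Y C r(1) s(1)]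
      by (intro tendsto_cinner bops_tendsto[OF CB] r(2) tendsto_const)
    ultimately show ?thesis by (rule LIMSEQ_unique)
  qed
  have "(\<lambda>m. cinner (C (ext_closure Y \<xi>)) (ext_point (s m))) \<longlonglongrightarrow> cinner (C (ext_closure Y \<xi>)) \<eta>"
    by (intro tendsto_cinner s(2) tendsto_const)
  moreover have "(\<lambda>m. cinner (C (ext_closure Y \<xi>)) (ext_point (s m))) \<longlonglongrightarrow> cinner (C \<xi>) (ext_closure (adj ED Y) \<eta>)"
    unfolding step by (intro tendsto_cinner s(3) tendsto_const)
  ultimately show ?thesis by (rule LIMSEQ_unique)
qed

lemma ext_closure_ldag:
  assumes Y: "Y \<in> Br"
  shows "ext_closure Y \<in> ldag D" and "\<eta> \<in> D \<Longrightarrow> adj D (ext_closure Y) \<eta> = ext_closure (adj ED Y) \<eta>"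
proof -
  have adj: "cinner (ext_closure Y \<xi>) \<eta> = cinner \<xi> (ext_closure (adj ED Y) \<eta>)" if "\<xi> \<in> D" "\<eta> \<in> D" for \<xi> \<eta>
    using cinner_Mc_ext_closure[OF Y Mc_id that] by simp
  show L: "ext_closure Y \<in> ldag D"
  proof (rule ldagI[OF _ ext_closure_mem_D[OF Y] ext_closure_mem_D[OF Br_adj[OF Y]] adj])
    show "clinear_on D (ext_closure Y)"
      by (simp add: clinear_on_def ext_closure_add[OF Y] ext_closure_scaleC[OF Y])
  qed (simp_all add: ext_closure_def)
  show "\<eta> \<in> D \<Longrightarrow> adj D (ext_closure Y) \<eta> = ext_closure (adj ED Y) \<eta>"
    using adj by (intro adj_unique[OF sep_D L] ext_closure_mem_D[OF Br_adj[OF Y]]) auto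
qed

lemma ext_closure_wbicomm: assumes Y: "Y \<in> Br" shows "ext_closure Y \<in> wbicomm UNIV D M"
  using ext_closure_ldag[OF Y] cinner_Mc_ext_closure[OF Y] by (simp add: wbicomm_def)

lemma reduce_ext_closure: assumes Y: "Y \<in> Br" shows "reduce D E (ext_closure Y) = Y"
proof
  fix x
  show "reduce D E (ext_closure Y) x = Y x"
  proof (cases "x \<in> ED")
    case True
    have x: "x \<in> D" and Ex: "E x = x" using True ED_D by auto
    have "ext_limit Y x (Y x)"
      by (rule ext_limitI[OF Y single_term(1)[OF Mc_id x]]) (simp_all add: single_term Ex)
    then have "ext_closure Y x = Y x" by (rule ext_closure_eqI[OF Y x])
    then show ?thesis using True by (simp add: reduce_on_ED)
  qed (simp add: reduce_def ldag_outside[OF wbicomm_ldag[OF Y]])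
qed

theorem reduced_wbicomm_eq: "reduced_alg D E (wbicomm UNIV D M) = Br"
proof
  show "reduced_alg D E (wbicomm UNIV D M) \<subseteq> Br"
    using reduce_wbicomm by (auto simp: reduced_alg_eq_image)
  show "Br \<subseteq> reduced_alg D E (wbicomm UNIV D M)"
    using reduce_ext_closure ext_closure_wbicomm by (force simp: reduced_alg_eq_image)
qed

end

theorem theorem2p2:
  fixes D :: "'h::chilbert_space set"
    and M :: "('h \<Rightarrow> 'h) set"
    and E Z :: "'h \<Rightarrow> 'h"
  assumes D_sub: "csubspace D"
    and D_dense: "closure D = UNIV"
    and M_Ostar: "is_Ostar_algebra D M"
    and M_closed: "graph_closed D M"
    and Mc_inv: "\<forall>C\<in>wcomm UNIV D M. C ` D \<subseteq> D"
    and E_proj: "is_proj UNIV E"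
    and E_comm: "E \<in> wcomm UNIV D M"
    and Z_proj: "is_proj UNIV Z"
    and Z_range: "range Z = closure (cspan (\<Union>C\<in>wcomm UNIV D M. range (C \<circ> E)))"
    and dom_hyp: "(\<Inter>X\<in>wbicomm (range E) (E ` D) (reduced_alg D E M).
                     closure_dom (ext_graph D (wcomm UNIV D M) E Z X)) = D"
  shows "reduced_alg D E (wbicomm UNIV D M) = wbicomm (range E) (E ` D) (reduced_alg D E M)"
proof -
  interpret reduction_domain D M E Z
    by unfold_locales (fact D_sub D_dense M_Ostar Mc_inv E_proj E_comm Z_proj Z_range dom_hyp)+
  show ?thesis by (rule reduced_wbicomm_eq)
qed

end
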